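(* Let $\alpha$ be a composition and let $\lambda$ be the partition obtained by sorting the parts of $\alpha$ into weakly decreasing order. Then every connected component of $\Gamma(\mathsf{plac})$ consisting of words whose Schensted tableaux have shape $\lambda$ contains a connected component of $\Gamma(\mathsf{hypo})$ consisting of words whose quasi-ribbon tableaux have shape $\alpha$.
   Context: Words are over the positive integers. Kashiwara operators $\tilde f_i$ ($i\ge1$) on a word $u$: replace each $i$ by $+$, each $i+1$ by $-$, delete other letters, then repeatedly delete factors $-+$ until the word has the form $+^{a}-^{b}$; if $a=0$, $\tilde f_i(u)$ is undefined, otherwise $\tilde f_i(u)$ changes the letter $i$ corresponding to the rightmost remaining $+$ into $i+1$. $\Gamma(\mathsf{plac})$ is the directed graph on all words with edges $u\to\tilde f_i(u)$ labelled $i$. Quasi-Kashiwara operator $f_i$: undefined if $u$ contains a (not necessarily consecutive) subsequence $(i+1)\,i$ or no letter $i$; otherwise replaces the rightmost $i$ by $i+1$. $\Gamma(\mathsf{hypo})$ is the directed graph on all words with edges $u\to f_i(u)$ labelled $i$; it is a subgraph of $\Gamma(\mathsf{plac})$. The Schensted tableau $P(u)$ of a word $u$ is the Young tableau produced by Schensted row insertion. A quasi-ribbon tableau of shape $\sigma=(\sigma_1,\dots,\sigma_r)$ is a filling with positive integers of the diagram having $\sigma_i$ cells in row $i$, leftmost cell of row $i+1$ directly below the rightmost cell of row $i$, weakly increasing along rows and strictly increasing down columns. The quasi-ribbon tableau of a word $u$ whose distinct letters are $a_1<\dots<a_k$ is the unique quasi-ribbon tableau containing $|u|_{a_j}$ copies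 of each $a_j$, in which $a_j$ and $a_{j+1}$ lie in different rows iff $u$ contains a subsequence $a_{j+1}a_j$. *)

theory Defs
  imports Main
begin

definition word :: "nat list \<Rightarrow> bool" where
  "word u \<longleftrightarrow> (\<forall>x\<in>set u. 0 < x)"

definition composition :: "nat list \<Rightarrow> bool" where
  "composition \<alpha> \<longleftrightarrow> (\<forall>x\<in>set \<alpha>. 0 < x)"

definition sort_partition :: "nat list \<Rightarrow> nat list" where
  "sort_partition \<alpha> = rev (sort \<alpha>)"

definition has_subseq2 :: "nat list \<Rightarrow> nat \<Rightarrow> nat \<Rightarrow> bool" where
  "has_subseq2 u b a \<longleftrightarrow> (\<exists>p q. p < q \<and> q < length u \<and> u ! p = b \<and> u ! q = a)"

text \<open>Signed subword for index i: letter i becomes + (True), letter i+1 becomes - (False);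
  each sign remembers its position in u.\<close>
definition signs :: "nat \<Rightarrow> nat list \<Rightarrow> (bool \<times> nat) list" where
  "signs i u = [(u ! p = i, p). p \<leftarrow> [0..<length u], u ! p = i \<or> u ! p = Suc i]"

text \<open>Repeated deletion of factors -+ (stack reduction; acc is the reversed reduced prefix).\<close>
fun reduce_signs :: "(bool \<times> nat) list \<Rightarrow> (bool \<times> nat) list \<Rightarrow> (bool \<times> nat) list" where
  "reduce_signs acc [] = rev acc"
| "reduce_signs acc (x # xs) =
     (if fst x \<and> acc \<noteq> [] \<and> \<not> fst (hd acc) then reduce_signs (tl acc) xs
      else reduce_signs (x # acc) xs)"

definition kashiwara_f :: "nat \<Rightarrow> nat list \<Rightarrow> nat list option" where
  "kashiwara_f i u =
     (let ps = [snd s. s \<leftarrow> reduce_signs [] (signs i u), fst s]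
      in if ps = [] then None else Some (u[last ps := Suc i]))"

definition quasi_f :: "nat \<Rightarrow> nat list \<Rightarrow> nat list option" where
  "quasi_f i u =
     (if has_subseq2 u (Suc i) i \<or> i \<notin> set u then None
      else Some (u[last [p. p \<leftarrow> [0..<length u], u ! p = i] := Suc i]))"

definition plac_edges :: "(nat list \<times> nat list) set" where
  "plac_edges = {(u, v). word u \<and> (\<exists>i\<ge>1. kashiwara_f i u = Some v)}"

definition hypo_edges :: "(nat list \<times> nat list) set" where
  "hypo_edges = {(u, v). word u \<and> (\<exists>i\<ge>1. quasi_f i u = Some v)}"

definition component :: "(nat list \<times> nat list) set \<Rightarrow> nat list \<Rightarrow> nat list set" where
  "component E u = ((E \<union> E\<inverse>)\<^sup>*) `` {u}"

definition plac_components :: "nat list set set" where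
  "plac_components = {component plac_edges u | u. word u}"

definition hypo_components :: "nat list set set" where
  "hypo_components = {component hypo_edges u | u. word u}"

text \<open>Row insertion of x into a tableau given as list of rows (top row first).\<close>
fun row_insert :: "nat \<Rightarrow> nat list list \<Rightarrow> nat list list" where
  "row_insert x [] = [[x]]"
| "row_insert x (r # rs) =
     (let k = length (takeWhile (\<lambda>y. y \<le> x) r)
      in if k = length r then (r @ [x]) # rs
         else (r[k := x]) # row_insert (r ! k) rs)"

definition schensted_P :: "nat list \<Rightarrow> nat list list" where
  "schensted_P u = foldl (\<lambda>T x. row_insert x T) [] u"

definition tableau_shape :: "nat list list \<Rightarrow> nat list" where
  "tableau_shape T = map length T"

text \<open>Group the increasing list of distinct letters into rows: consecutive letters a < b
  go into different rows iff u contains the subsequence b a.\<close>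
fun qr_groups :: "nat list \<Rightarrow> nat list \<Rightarrow> nat list list" where
  "qr_groups u [] = []"
| "qr_groups u [a] = [[a]]"
| "qr_groups u (a # b # rest) =
     (let g = qr_groups u (b # rest)
      in if has_subseq2 u b a then [a] # g else (a # hd g) # tl g)"

definition qr_tableau :: "nat list \<Rightarrow> nat list list" where
  "qr_tableau u = map (\<lambda>g. concat (map (\<lambda>a. replicate (count_list u a) a) g))
                      (qr_groups u (sorted_list_of_set (set u)))"

definition qr_shape :: "nat list \<Rightarrow> nat list" where
  "qr_shape u = map length (qr_tableau u)"

end

theory Submission
  imports Defs "HOL-Library.Multiset" "HOL-Library.More_List" "HOL-Combinatorics.Transposition"
begin

text \<open>
  A component \<open>C\<close> of \<open>\<Gamma>(plac)\<close> is a crystal: following \<open>f\<^sub>i\<close>-edges from any of its words ends in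
  a lowest weight word \<open>L\<close>, on which no \<open>f\<^sub>i\<close> acts. Every prefix of \<open>L\<close> has at least as many letters
  \<open>i + 1\<close> as letters \<open>i\<close>; this pins down the Schensted tableau of \<open>L\<close> and shows that \<open>L\<close> has
  content \<open>\<lambda>\<close> on a window of consecutive letters. The crystal reflections \<open>s\<^sub>i\<close>, obtained by iterating
  \<open>f\<^sub>i\<close> or its inverse, permute this content into \<open>\<alpha>\<close>. In the resulting word \<open>u\<close> any two consecutive
  letters of the window form a descent (the larger one occurs before the smaller one): otherwise the
  operators of \<open>\<Gamma>(hypo)\<close> merge them into one letter and produce a word of \<open>C\<close> with fewer distinct
  letters than its Schensted tableau has rows. Hence the quasi-ribbon tableau of \<open>u\<close> has shape \<open>\<alpha>\<close>.
  Finally, quasi-Kashiwara operators are Kashiwara operators and preserve the quasi-ribbon shape, so the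
  \<open>\<Gamma>(hypo)\<close>-component of \<open>u\<close> lies in \<open>C\<close> and consists of words of shape \<open>\<alpha>\<close>.
\<close>

lemma concat_map_if_singleton:
  "concat (map (\<lambda>x. if P x then [f x] else []) xs) = map f (filter P xs)"
  by (induction xs) auto

lemma count_list_update:
  "q < length xs \<Longrightarrow>
   count_list (xs[q := y]) z + (if xs ! q = z then 1 else 0) = count_list xs z + (if y = z then 1 else 0)"
proof (induction xs arbitrary: q)
  case (Cons a xs)
  then show ?case
    by (cases q) (auto dest: Cons.IH split: if_splits)
qed simp

lemma le_last_filter_upt: "q \<in> set (filter P [0..<n]) \<Longrightarrow> q \<le> last (filter P [0..<n])"
  by (induction n) auto

lemma all_le_Suc_conv: "(\<forall>j\<le>Suc n. Q j) \<longleftrightarrow> Q 0 \<and> (\<forall>j\<le>n. Q (Suc j))"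
  by (metis Suc_le_mono le0 not0_implies_Suc)

lemma less_length_takeWhile_iff:
  "r < length (takeWhile P xs) \<longleftrightarrow> r < length xs \<and> (\<forall>j\<le>r. P (xs ! j))"
proof (induction xs arbitrary: r)
  case (Cons a xs)
  then show ?case
    by (cases r) (auto simp: all_le_Suc_conv)
qed simp

lemma length_takeWhile_map_upt:
  assumes "m \<le> n" "\<And>c. c < n \<Longrightarrow> P (f c) \<longleftrightarrow> c < m"
  shows "length (takeWhile P (map f [0..<n])) = m"
proof -
  have "r < length (takeWhile P (map f [0..<n])) \<longleftrightarrow> r < m" for r
    using assms by (auto simp: less_length_takeWhile_iff)
  then show ?thesis
    by (metis less_irrefl nat_neq_iff)
qed

lemma filter_less_eq_takeWhile:
  "sorted_wrt (\<ge>) (l :: nat list) \<Longrightarrow> filter (\<lambda>y. c < y) l = takeWhile (\<lambda>y. c < y) l"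
proof (induction l)
  case (Cons a l)
  then show ?case
    by (cases l) (auto simp: filter_empty_conv)
qed simp

lemma hd_list_update: "r \<noteq> [] \<Longrightarrow> hd (r[k := x]) = (if k = 0 then x else hd r)"
  by (cases r; cases k) auto

lemma nth_default_antimono:
  "sorted_wrt (\<ge>) l \<Longrightarrow> r \<le> s \<Longrightarrow> nth_default 0 (l :: nat list) s \<le> nth_default 0 l r"
  by (auto simp: nth_default_def sorted_wrt_iff_nth_less le_less)

definition swap_adjacent :: "nat \<Rightarrow> 'a list \<Rightarrow> 'a list" where
  "swap_adjacent m xs = xs[m := xs ! Suc m, Suc m := xs ! m]"

lemma length_swap_adjacent [simp]: "length (swap_adjacent m xs) = length xs"
  by (simp add: swap_adjacent_def)

lemma swap_adjacent_Cons: "swap_adjacent (Suc m) (y # xs) = y # swap_adjacent m xs"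
  by (simp add: swap_adjacent_def)

lemma adjacent_swaps_move_to_front:
  assumes "Q xs" "m < length xs"
    and swap: "\<And>zs m. Q zs \<Longrightarrow> Suc m < length zs \<Longrightarrow> Q (swap_adjacent m zs)"
  shows "Q (xs ! m # take m xs @ drop (Suc m) xs)"
  using assms(1,2)
proof (induction m arbitrary: xs)
  case 0
  then show ?case by (cases xs) auto
next
  case (Suc m)
  let ?ys = "swap_adjacent m xs"
  have "Q (?ys ! m # take m ?ys @ drop (Suc m) ?ys)"
    using Suc.IH[of ?ys] swap[OF Suc.prems] Suc.prems(2) by simp
  moreover have "drop (Suc m) ?ys = xs ! m # drop (Suc (Suc m)) xs"
    using Suc.prems(2) by (simp add: swap_adjacent_def Cons_nth_drop_Suc[symmetric] drop_update_cancel)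
  ultimately show ?case
    using Suc.prems(2) by (simp add: swap_adjacent_def take_Suc_conv_app_nth)
qed

lemma mset_eq_adjacent_swaps_induct:
  assumes "mset xs = mset ys" "Q xs"
    and "\<And>zs m. Q zs \<Longrightarrow> Suc m < length zs \<Longrightarrow> Q (swap_adjacent m zs)"
  shows "Q ys"
  using assms
proof (induction ys arbitrary: xs Q)
  case Nil
  then show ?case by simp
next
  case (Cons y ys)
  obtain m where m: "m < length xs" "xs ! m = y"
    using Cons.prems(1) by (metis in_set_conv_nth list.set_intros(1) set_mset_mset)
  let ?xs' = "take m xs @ drop (Suc m) xs"
  have "mset xs = add_mset y (mset ?xs')"
    using m by (metis id_take_nth_drop mset.simps(2) mset_append union_mset_add_mset_right)
  then have "mset ?xs' = mset ys"
    using Cons.prems(1) by simp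
  moreover have "Q (y # ?xs')"
    using adjacent_swaps_move_to_front[of Q xs m] Cons.prems m by simp
  moreover have "Q (y # swap_adjacent m zs)" if "Q (y # zs)" "Suc m < length zs" for zs m
    using Cons.prems(3)[of "y # zs" "Suc m"] that by (simp add: swap_adjacent_Cons)
  ultimately show ?case
    using Cons.IH[of ?xs' "\<lambda>zs. Q (y # zs)"] by blast
qed

section \<open>Kashiwara operators and the prefix balance\<close>

text \<open>In the bracketing rule for \<open>f\<^sub>i\<close>, a letter \<open>i\<close> stays unmatched exactly when the balance
  \<open>#i - #(i+1)\<close> of the prefix ending with it exceeds that of all shorter prefixes (\<open>reduced_signs\<close>).\<close>

definition balance :: "nat \<Rightarrow> nat list \<Rightarrow> nat \<Rightarrow> int" where
  "balance i u t = int (count_list (take t u) i) - int (count_list (take t u) (Suc i))"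

definition max_balance :: "nat \<Rightarrow> nat list \<Rightarrow> int" where
  "max_balance i u = Max (balance i u ` {..length u})"

definition is_record :: "nat \<Rightarrow> nat list \<Rightarrow> nat \<Rightarrow> bool" where
  "is_record i u p \<longleftrightarrow> p < length u \<and> u ! p = i \<and> (\<forall>t\<le>p. balance i u t < balance i u (Suc p))"

definition letter_weight :: "nat \<Rightarrow> nat \<Rightarrow> int" where
  "letter_weight i y = (if y = i then 1 else if y = Suc i then -1 else 0)"

lemma letter_weight_simps [simp]: "letter_weight i i = 1" "letter_weight i (Suc i) = -1"
  by (auto simp: letter_weight_def)

lemma balance_0 [simp]: "balance i u 0 = 0"
  by (simp add: balance_def)

lemma balance_Suc: "p < length u \<Longrightarrow> balance i u (Suc p) = balance i u p + letter_weight i (u ! p)"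
  by (simp add: balance_def letter_weight_def take_Suc_conv_app_nth)

lemma balance_length: "balance i u (length u) = int (count_list u i) - int (count_list u (Suc i))"
  by (simp add: balance_def)

lemma balance_append: "t \<le> length u \<Longrightarrow> balance i (u @ v) t = balance i u t"
  by (simp add: balance_def)

lemma balance_snoc_last:
  "balance i (u @ [x]) (Suc (length u)) = balance i u (length u) + letter_weight i x"
  by (simp add: balance_def letter_weight_def)

lemma balance_update:
  assumes "p < length u"
  shows "balance i (u[p := y]) t =
    (if t \<le> p then balance i u t else balance i u t + letter_weight i y - letter_weight i (u ! p))"
proof (cases "t \<le> p")
  case False
  then have "take t (u[p := y]) = (take t u)[p := y]" "p < length (take t u)" "take t u ! p = u ! p"
    using assms by (auto simp: take_update_swap)
  then show ?thesis
    using False count_list_update[of p "take t u" y i] count_list_update[of p "take t u" y "Suc i"]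
    by (simp add: balance_def letter_weight_def split: if_splits)
qed (simp add: balance_def)

lemma balance_le_max: "t \<le> length u \<Longrightarrow> balance i u t \<le> max_balance i u"
  unfolding max_balance_def by (rule Max_ge) auto

lemma max_balance_attained: "\<exists>t\<le>length u. balance i u t = max_balance i u"
proof -
  have "max_balance i u \<in> balance i u ` {..length u}"
    unfolding max_balance_def by (rule Max_in) auto
  then show ?thesis by auto
qed

lemma max_balance_nonneg: "0 \<le> max_balance i u"
  using balance_le_max[of 0 u i] by simp

lemma max_balance_eqI:
  assumes "\<And>t. t \<le> length u \<Longrightarrow> balance i u t \<le> m" "t0 \<le> length u" "balance i u t0 = m"
  shows "max_balance i u = m"
  using max_balance_attained[of u i] balance_le_max[OF assms(2), of i] assms by force

lemma max_balance_snoc: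
  "max_balance i (u @ [x]) = max (max_balance i u) (balance i u (length u) + letter_weight i x)"
proof -
  have "balance i (u @ [x]) ` {..length (u @ [x])} =
      insert (balance i (u @ [x]) (Suc (length u))) (balance i u ` {..length u})"
    using balance_append[of _ u i "[x]"] by (auto simp: atMost_Suc)
  then show ?thesis
    unfolding max_balance_def by (simp add: Max_insert max.commute balance_snoc_last)
qed

lemma is_record_append: "p < length u \<Longrightarrow> is_record i (u @ v) p = is_record i u p"
  unfolding is_record_def by (auto simp: balance_append nth_append)

lemma is_record_snoc_last:
  "is_record i (u @ [x]) (length u) \<longleftrightarrow> x = i \<and> balance i u (length u) = max_balance i u"
proof
  assume r: "is_record i (u @ [x]) (length u)"
  then have "x = i" by (simp add: is_record_def)
  moreover obtain t where "t \<le> length u" "balance i u t = max_balance i u"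
    using max_balance_attained by blast
  moreover note r balance_le_max[of "length u" u i]
  ultimately show "x = i \<and> balance i u (length u) = max_balance i u"
    unfolding is_record_def by (force simp: balance_append balance_snoc_last)
next
  assume a: "x = i \<and> balance i u (length u) = max_balance i u"
  have "balance i (u @ [x]) t < balance i (u @ [x]) (Suc (length u))" if "t \<le> length u" for t
    using balance_le_max[OF that, of i] a that by (simp add: balance_append balance_snoc_last)
  then show "is_record i (u @ [x]) (length u)"
    unfolding is_record_def using a by simp
qed

definition cancel_step :: "(bool \<times> nat) list \<Rightarrow> bool \<times> nat \<Rightarrow> (bool \<times> nat) list" where
  "cancel_step acc x = (if fst x \<and> acc \<noteq> [] \<and> \<not> fst (hd acc) then tl acc else x # acc)"

lemma reduce_signs_eq_foldl: "reduce_signs acc xs = rev (foldl cancel_step acc xs)"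
  by (induction acc xs rule: reduce_signs.induct) (auto simp: cancel_step_def)

lemma signs_snoc:
  "signs i (u @ [x]) = signs i u @ (if x = i \<or> x = Suc i then [(x = i, length u)] else [])"
proof -
  have "signs i (u @ [x]) =
      [((u @ [x]) ! p = i, p). p \<leftarrow> [0..<length u], (u @ [x]) ! p = i \<or> (u @ [x]) ! p = Suc i]
      @ [((u @ [x]) ! p = i, p). p \<leftarrow> [length u], (u @ [x]) ! p = i \<or> (u @ [x]) ! p = Suc i]"
    unfolding signs_def by simp
  also have "[((u @ [x]) ! p = i, p). p \<leftarrow> [0..<length u], (u @ [x]) ! p = i \<or> (u @ [x]) ! p = Suc i]
      = signs i u"
    unfolding signs_def by (intro arg_cong[where f=concat] map_cong) (auto simp: nth_append)
  finally show ?thesis by simp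
qed

lemma filter_is_record_snoc:
  "filter (is_record i (u @ [x])) [0..<length (u @ [x])] =
     filter (is_record i u) [0..<length u]
     @ (if x = i \<and> balance i u (length u) = max_balance i u then [length u] else [])"
proof -
  have "filter (is_record i (u @ [x])) [0..<length u] = filter (is_record i u) [0..<length u]"
    by (rule filter_cong) (auto simp: is_record_append)
  then show ?thesis
    using is_record_snoc_last[of i u x] by simp
qed

lemma reduced_signs:
  "\<exists>ms. foldl cancel_step [] (signs i u) = ms @ rev (map (Pair True) (filter (is_record i u) [0..<length u]))
     \<and> (\<forall>m\<in>set ms. \<not> fst m) \<and> int (length ms) = max_balance i u - balance i u (length u)"
proof (induction u rule: rev_induct)
  case Nil
  then show ?case by (simp add: signs_def max_balance_def)
next
  case (snoc x u)
  let ?R = "filter (is_record i u) [0..<length u]"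
  let ?P = "rev (map (Pair True) ?R)"
  obtain ms where IH: "foldl cancel_step [] (signs i u) = ms @ ?P"
    "\<forall>m\<in>set ms. \<not> fst m" "int (length ms) = max_balance i u - balance i u (length u)"
    using snoc by blast
  note records = filter_is_record_snoc[of i u x] and max = max_balance_snoc[of i u x]
    and bal = balance_snoc_last[of i u x] and le = balance_le_max[of "length u" u i]
  consider "x = i" "ms = []" | "x = i" "ms \<noteq> []" | "x = Suc i" | "x \<noteq> i" "x \<noteq> Suc i"
    by blast
  then show ?case
  proof cases
    case 1
    have "foldl cancel_step [] (signs i (u @ [x])) = [] @ rev (map (Pair True) (?R @ [length u]))"
      using IH(1) 1 by (cases ?R rule: rev_cases) (auto simp: signs_snoc cancel_step_def)
    then show ?thesis
      using IH(3) 1 records max bal le by (intro exI[of _ "[]"]) auto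
  next
    case 2
    then have "foldl cancel_step [] (signs i (u @ [x])) = tl ms @ ?P"
      using IH(1,2) by (cases ms) (auto simp: signs_snoc cancel_step_def)
    then show ?thesis
      using IH(2,3) 2 records max bal le by (intro exI[of _ "tl ms"]) (auto simp: list.set_sel(2))
  next
    case 3
    then have "foldl cancel_step [] (signs i (u @ [x])) = ((False, length u) # ms) @ ?P"
      using IH(1) by (simp add: signs_snoc cancel_step_def)
    then show ?thesis
      using IH(2,3) 3 records max bal le by (intro exI[of _ "(False, length u) # ms"]) auto
  next
    case 4
    then show ?thesis
      using IH records max bal le by (intro exI[of _ ms]) (auto simp: signs_snoc letter_weight_def)
  qed
qed

lemma kashiwara_f_records:
  "kashiwara_f i u =
     (let ps = filter (is_record i u) [0..<length u] in if ps = [] then None else Some (u[last ps := Suc i]))"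
proof -
  obtain ms where
      ms: "foldl cancel_step [] (signs i u) = ms @ rev (map (Pair True) (filter (is_record i u) [0..<length u]))"
     "\<forall>m\<in>set ms. \<not> fst m"
    using reduced_signs by blast
  have "filter fst (rev ms) = []"
    using ms(2) by (simp add: filter_empty_conv)
  then have "[snd s. s \<leftarrow> reduce_signs [] (signs i u), fst s] = filter (is_record i u) [0..<length u]"
    unfolding reduce_signs_eq_foldl ms(1) by (simp add: concat_map_if_singleton comp_def)
  then show ?thesis
    unfolding kashiwara_f_def by simp
qed

lemma kashiwara_f_SomeD:
  assumes "kashiwara_f i u = Some v"
  shows "\<exists>p<length u. u ! p = i \<and> v = u[p := Suc i]"
proof -
  let ?ps = "filter (is_record i u) [0..<length u]"
  have "?ps \<noteq> []" and v: "v = u[last ?ps := Suc i]"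
    using assms by (auto simp: kashiwara_f_records Let_def split: if_splits)
  then have "is_record i u (last ?ps)"
    using last_in_set[of ?ps] by simp
  then show ?thesis
    using v unfolding is_record_def by blast
qed

lemma kashiwara_f_last_record:
  assumes "is_record i u p" and "\<And>q. p < q \<Longrightarrow> q < length u \<Longrightarrow> \<not> is_record i u q"
  shows "kashiwara_f i u = Some (u[p := Suc i])"
proof -
  have p: "p < length u"
    using assms(1) by (simp add: is_record_def)
  have "[0..<length u] = [0..<p] @ p # [Suc p..<length u]"
    using p upt_add_eq_append[of 0 p "length u - p"] by (simp add: upt_conv_Cons)
  then have "filter (is_record i u) [0..<length u] = filter (is_record i u) [0..<p] @ [p]"
    using assms by (simp add: filter_empty_conv)
  then show ?thesis
    by (simp add: kashiwara_f_records)
qed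

lemma kashiwara_f_first_max:
  assumes p: "p < length u" and max: "balance i u (Suc p) = max_balance i u"
    and before: "\<And>t. t \<le> p \<Longrightarrow> balance i u t < max_balance i u"
  shows "u ! p = i" and "kashiwara_f i u = Some (u[p := Suc i])"
proof -
  show up: "u ! p = i"
    using balance_Suc[OF p, of i] before[of p] max by (auto simp: letter_weight_def split: if_splits)
  have "is_record i u p"
    using p up max before unfolding is_record_def by simp
  moreover have "\<not> is_record i u q" if "p < q" "q < length u" for q
  proof
    assume "is_record i u q"
    then have "balance i u (Suc p) < balance i u (Suc q)"
      using that unfolding is_record_def by simp
    then show False
      using max balance_le_max[of "Suc q" u i] that by simp
  qed
  ultimately show "kashiwara_f i u = Some (u[p := Suc i])"
    by (rule kashiwara_f_last_record)
qed

lemma max_balance_first_attained: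
  "\<exists>t0\<le>length u. balance i u t0 = max_balance i u \<and> (\<forall>t<t0. balance i u t < max_balance i u)"
proof -
  obtain t1 where t1: "t1 \<le> length u" "balance i u t1 = max_balance i u"
    using max_balance_attained by blast
  define t0 where "t0 = (LEAST t. balance i u t = max_balance i u)"
  have "balance i u t0 = max_balance i u" "t0 \<le> t1"
    unfolding t0_def using t1 by (auto intro: LeastI Least_le)
  moreover have "balance i u t < max_balance i u" if "t < t0" for t
    using not_less_Least[OF that[unfolded t0_def]] balance_le_max[of t u i] \<open>t0 \<le> t1\<close> t1 that
    by fastforce
  ultimately show ?thesis
    using t1 by (intro exI[of _ t0]) auto
qed

lemma max_balance_last_attained:
  "\<exists>t0\<le>length u. balance i u t0 = max_balance i u
     \<and> (\<forall>t. t0 < t \<and> t \<le> length u \<longrightarrow> balance i u t < max_balance i u)"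
proof -
  define P where "P = {t. t \<le> length u \<and> balance i u t = max_balance i u}"
  have "finite P" "P \<noteq> {}"
    unfolding P_def using max_balance_attained by auto
  then have "Max P \<in> P" "\<And>t. t \<in> P \<Longrightarrow> t \<le> Max P"
    by auto
  moreover have "balance i u t < max_balance i u" if "Max P < t" "t \<le> length u" for t
  proof (rule ccontr)
    assume "\<not> balance i u t < max_balance i u"
    then have "t \<in> P"
      using balance_le_max[of t u i] that(2) unfolding P_def by simp
    then show False
      using calculation(2) that(1) by fastforce
  qed
  ultimately show ?thesis
    unfolding P_def by blast
qed

lemma kashiwara_f_decreases_max_balance:
  assumes "0 < max_balance i u"
  shows "\<exists>p<length u. u ! p = i \<and> kashiwara_f i u = Some (u[p := Suc i])
           \<and> max_balance i (u[p := Suc i]) = max_balance i u - 1"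
proof -
  obtain t0 where t0: "t0 \<le> length u" "balance i u t0 = max_balance i u"
      "\<And>t. t < t0 \<Longrightarrow> balance i u t < max_balance i u"
    using max_balance_first_attained by blast
  obtain p where p: "t0 = Suc p"
    using t0(2) assms by (cases t0) auto
  have plen: "p < length u"
    using p t0(1) by simp
  have up: "u ! p = i" and f: "kashiwara_f i u = Some (u[p := Suc i])"
    using kashiwara_f_first_max[OF plen] t0 p by auto
  have bal: "balance i (u[p := Suc i]) t = (if t \<le> p then balance i u t else balance i u t - 2)" for t
    using balance_update[OF plen, of i "Suc i"] up by simp
  have "max_balance i (u[p := Suc i]) = max_balance i u - 1"
  proof (rule max_balance_eqI[of _ _ _ p])
    show "balance i (u[p := Suc i]) t \<le> max_balance i u - 1" if "t \<le> length (u[p := Suc i])" for t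
      using bal[of t] t0(3)[of t] balance_le_max[of t u i] that p by (auto split: if_splits)
    show "balance i (u[p := Suc i]) p = max_balance i u - 1"
      using bal[of p] balance_Suc[OF plen, of i] up t0(2) p by simp
  qed (use plen in simp)
  then show ?thesis
    using plen up f by blast
qed

lemma kashiwara_f_preimage_increases_max_balance:
  assumes "balance i u (length u) < max_balance i u"
  shows "\<exists>p<length u. u ! p = Suc i \<and> kashiwara_f i (u[p := i]) = Some u
           \<and> max_balance i (u[p := i]) = max_balance i u + 1"
proof -
  define M where "M = max_balance i u"
  obtain p where p: "p \<le> length u" "balance i u p = M"
      "\<And>t. p < t \<Longrightarrow> t \<le> length u \<Longrightarrow> balance i u t < M"
    using max_balance_last_attained unfolding M_def by blast
  have plen: "p < length u"
    using p(1,2) assms unfolding M_def by (cases "p = length u") auto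
  have up: "u ! p = Suc i"
    using balance_Suc[OF plen, of i] p(2) p(3)[of "Suc p"] plen
    by (auto simp: letter_weight_def split: if_splits)
  let ?v = "u[p := i]"
  have bal: "balance i ?v t = (if t \<le> p then balance i u t else balance i u t + 2)" for t
    using balance_update[OF plen, of i i] up by simp
  have bal_p: "balance i ?v (Suc p) = M + 1"
    using bal[of "Suc p"] balance_Suc[OF plen, of i] up p(2) by simp
  have max_v: "max_balance i ?v = M + 1"
  proof (rule max_balance_eqI[of _ _ _ "Suc p"])
    show "balance i ?v t \<le> M + 1" if "t \<le> length ?v" for t
      using bal[of t] p(3)[of t] balance_le_max[of t u i] that unfolding M_def by (auto split: if_splits)
  qed (use plen bal_p in simp_all)
  have "kashiwara_f i ?v = Some (?v[p := Suc i])"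
    using plen bal_p max_v bal balance_le_max[of _ u i] unfolding M_def
    by (intro kashiwara_f_first_max(2)) auto
  also have "?v[p := Suc i] = u"
    using up by (metis list_update_id list_update_overwrite)
  finally show ?thesis
    using plen up max_v unfolding M_def by blast
qed

lemma kashiwara_f_None_balance_nonpos:
  assumes "kashiwara_f i u = None" "t \<le> length u"
  shows "balance i u t \<le> 0"
  using kashiwara_f_decreases_max_balance[of i u] balance_le_max[OF assms(2), of i] assms(1) by fastforce

section \<open>Quasi-Kashiwara operators\<close>

lemma balance_mono:
  assumes "t \<le> s" "s \<le> length u" "\<And>q. t \<le> q \<Longrightarrow> q < s \<Longrightarrow> u ! q \<noteq> Suc i"
  shows "balance i u t \<le> balance i u s"
  using assms
proof (induction s rule: dec_induct)
  case (step s)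
  then show ?case
    using balance_Suc[of s u i] by (auto simp: letter_weight_def)
qed simp

lemma quasi_f_SomeE:
  assumes "quasi_f i u = Some v"
  obtains p where "p < length u" "u ! p = i" "\<And>q. p < q \<Longrightarrow> q < length u \<Longrightarrow> u ! q \<noteq> i"
    "v = u[p := Suc i]" "\<not> has_subseq2 u (Suc i) i"
proof -
  have ns: "\<not> has_subseq2 u (Suc i) i" and iu: "i \<in> set u"
    using assms by (auto simp: quasi_f_def split: if_splits)
  let ?ps = "filter (\<lambda>q. u ! q = i) [0..<length u]"
  have "?ps \<noteq> []"
    using iu by (auto simp: filter_empty_conv in_set_conv_nth)
  define p where "p = last ?ps"
  have "p \<in> set ?ps"
    unfolding p_def using \<open>?ps \<noteq> []\<close> by (rule last_in_set)
  then have p: "p < length u" "u ! p = i"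
    by auto
  have "u ! q \<noteq> i" if "p < q" "q < length u" for q
    using le_last_filter_upt[of q "\<lambda>q. u ! q = i" "length u"] that unfolding p_def by auto
  moreover have "v = u[p := Suc i]"
    using assms ns iu unfolding quasi_f_def p_def by (simp add: concat_map_if_singleton)
  ultimately show ?thesis
    using that p ns by blast
qed

lemma quasi_f_imp_kashiwara_f:
  assumes "quasi_f i u = Some v"
  shows "kashiwara_f i u = Some v"
proof -
  obtain p where p: "p < length u" "u ! p = i" "\<And>q. p < q \<Longrightarrow> q < length u \<Longrightarrow> u ! q \<noteq> i"
    "v = u[p := Suc i]" and ns: "\<not> has_subseq2 u (Suc i) i"
    using quasi_f_SomeE[OF assms] by blast
  have "u ! q \<noteq> Suc i" if "q < p" for q
    using ns that p(1,2) unfolding has_subseq2_def by blast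
  then have "balance i u t \<le> balance i u p" if "t \<le> p" for t
    using that p(1) by (intro balance_mono) auto
  then have "is_record i u p"
    using p(1,2) balance_Suc[OF p(1), of i] unfolding is_record_def by force
  moreover have "\<not> is_record i u q" if "p < q" "q < length u" for q
    using p(3)[OF that] unfolding is_record_def by blast
  ultimately show ?thesis
    using p(4) by (simp add: kashiwara_f_last_record)
qed

lemma quasi_f_no_descent:
  assumes "quasi_f i u = Some v"
  shows "\<not> has_subseq2 v (Suc i) i"
proof
  obtain p where p: "p < length u" "u ! p = i" "\<And>q. p < q \<Longrightarrow> q < length u \<Longrightarrow> u ! q \<noteq> i"
      "v = u[p := Suc i]" and no_descent: "\<not> has_subseq2 u (Suc i) i"
    using quasi_f_SomeE[OF assms] by blast
  assume "has_subseq2 v (Suc i) i"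
  then obtain r r' where r: "r < r'" "r' < length u" "v ! r = Suc i" "v ! r' = i"
    unfolding has_subseq2_def using p(4) by auto
  have "r' \<noteq> p"
    using r(4) p(1,4) by auto
  then have "u ! r' = i"
    using r(4) p(4) by simp
  then have "r' < p"
    using p(3)[of r'] r(2) \<open>r' \<noteq> p\<close> by fastforce
  then have "u ! r = Suc i"
    using r p(4) by auto
  then show False
    using no_descent r \<open>u ! r' = i\<close> unfolding has_subseq2_def by blast
qed

section \<open>Moves inside a connected component of \<open>\<Gamma>(plac)\<close>\<close>

lemma component_refl: "u \<in> component E u"
  by (simp add: component_def)

lemma component_step: "v \<in> component E u \<Longrightarrow> (v, w) \<in> E \<Longrightarrow> w \<in> component E u"
  by (auto simp: component_def intro: rtrancl_into_rtrancl)

lemma component_step_converse: "v \<in> component E u \<Longrightarrow> (w, v) \<in> E \<Longrightarrow> w \<in> component E u"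
  by (auto simp: component_def intro: rtrancl_into_rtrancl)

lemma component_trans: "v \<in> component E u \<Longrightarrow> w \<in> component E v \<Longrightarrow> w \<in> component E u"
  by (auto simp: component_def)

lemma component_mono: "E \<subseteq> F \<Longrightarrow> component E u \<subseteq> component F u"
  unfolding component_def by (meson Image_mono rtrancl_mono sup_mono converse_mono order_refl)

lemma word_update: "word u \<Longrightarrow> 0 < y \<Longrightarrow> word (u[p := y])"
  unfolding word_def using set_update_subset_insert by fastforce

lemma word_plac_component:
  assumes "word w0" "u \<in> component plac_edges w0"
  shows "word u"
proof -
  have "(w0, u) \<in> (plac_edges \<union> plac_edges\<inverse>)\<^sup>*"
    using assms(2) by (simp add: component_def)
  then show ?thesis
  proof induction
    case (step v w)
    then show ?case
      by (auto simp: plac_edges_def word_update dest!: kashiwara_f_SomeD)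
  qed (rule assms(1))
qed

lemma kashiwara_f_in_plac_component:
  assumes "word w0" "u \<in> component plac_edges w0" "1 \<le> i" "kashiwara_f i u = Some v"
  shows "v \<in> component plac_edges w0"
  using assms word_plac_component[OF assms(1,2)] by (auto simp: plac_edges_def intro: component_step)

lemma kashiwara_f_preimage_in_plac_component:
  assumes "u \<in> component plac_edges w0" "1 \<le> i" "kashiwara_f i v = Some u" "word v"
  shows "v \<in> component plac_edges w0"
proof -
  have "(v, u) \<in> plac_edges"
    using assms(2-4) unfolding plac_edges_def by auto
  then show ?thesis
    by (rule component_step_converse[OF assms(1)])
qed

lemma hypo_edges_subset_plac_edges: "hypo_edges \<subseteq> plac_edges"
  unfolding hypo_edges_def plac_edges_def using quasi_f_imp_kashiwara_f by blast

lemma quasi_f_in_plac_component: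
  assumes "word w0" "u \<in> component plac_edges w0" "1 \<le> i" "quasi_f i u = Some v"
  shows "v \<in> component plac_edges w0"
  using kashiwara_f_in_plac_component[OF assms(1-3) quasi_f_imp_kashiwara_f[OF assms(4)]] .

lemma count_list_update_letter:
  assumes "p < length u" "u ! p = a" "a \<noteq> y"
  shows "int (count_list (u[p := y]) x) =
    int (count_list u x) - (if x = a then 1 else 0) + (if x = y then 1 else 0)"
  using count_list_update[OF assms(1), of y x] assms(2,3) by auto

lemma kashiwara_f_iterate:
  assumes "word w0" "u \<in> component plac_edges w0" "1 \<le> i" "int n \<le> max_balance i u"
  shows "\<exists>v\<in>component plac_edges w0.
    \<forall>x. int (count_list v x) = int (count_list u x) - int n * letter_weight i x"
  using assms(2,4)
proof (induction n arbitrary: u)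
  case (Suc n)
  obtain p where p: "p < length u" "u ! p = i" "kashiwara_f i u = Some (u[p := Suc i])"
     "max_balance i (u[p := Suc i]) = max_balance i u - 1"
    using kashiwara_f_decreases_max_balance[of i u] Suc.prems(2) by auto
  have "u[p := Suc i] \<in> component plac_edges w0"
    using kashiwara_f_in_plac_component[OF assms(1) Suc.prems(1) assms(3) p(3)] .
  then obtain v where v: "v \<in> component plac_edges w0"
      "\<forall>x. int (count_list v x) = int (count_list (u[p := Suc i]) x) - int n * letter_weight i x"
    using Suc.IH Suc.prems(2) p(4) by fastforce
  have "int (count_list v x) = int (count_list u x) - int (Suc n) * letter_weight i x" for x
    using v(2)[rule_format, of x] count_list_update_letter[OF p(1,2), of "Suc i" x]
    by (auto simp: letter_weight_def algebra_simps)
  then show ?case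
    using v(1) by blast
qed auto

lemma kashiwara_e_iterate:
  assumes "word w0" "u \<in> component plac_edges w0" "1 \<le> i"
    and "int n \<le> max_balance i u - balance i u (length u)"
  shows "\<exists>v\<in>component plac_edges w0.
    \<forall>x. int (count_list v x) = int (count_list u x) + int n * letter_weight i x"
  using assms(2,4)
proof (induction n arbitrary: u)
  case (Suc n)
  obtain p where p: "p < length u" "u ! p = Suc i" "kashiwara_f i (u[p := i]) = Some u"
     "max_balance i (u[p := i]) = max_balance i u + 1"
    using kashiwara_f_preimage_increases_max_balance[of i u] Suc.prems(2) by auto
  have "word (u[p := i])"
    using word_plac_component[OF assms(1) Suc.prems(1)] assms(3) by (simp add: word_update)
  then have "u[p := i] \<in> component plac_edges w0"
    using kashiwara_f_preimage_in_plac_component[OF Suc.prems(1) assms(3) p(3)] by simp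
  moreover have "balance i (u[p := i]) (length u) = balance i u (length u) + 2"
    using balance_update[OF p(1), of i i "length u"] p(1,2) by simp
  ultimately obtain v where v: "v \<in> component plac_edges w0"
      "\<forall>x. int (count_list v x) = int (count_list (u[p := i]) x) + int n * letter_weight i x"
    using Suc.IH Suc.prems(2) p(4) by fastforce
  have "int (count_list v x) = int (count_list u x) + int (Suc n) * letter_weight i x" for x
    using v(2)[rule_format, of x] count_list_update_letter[OF p(1,2), of i x]
    by (auto simp: letter_weight_def algebra_simps)
  then show ?case
    using v(1) by blast
qed auto

text \<open>The crystal reflection \<open>s\<^sub>i\<close>, realised by iterating \<open>f\<^sub>i\<close> or its inverse.\<close>

lemma plac_component_transpose_content:
  assumes "word w0" "u \<in> component plac_edges w0" "1 \<le> i"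
  shows "\<exists>v\<in>component plac_edges w0. count_list v = count_list u \<circ> transpose i (Suc i)"
proof (cases "count_list u (Suc i) \<le> count_list u i")
  case True
  let ?n = "count_list u i - count_list u (Suc i)"
  have "int ?n \<le> max_balance i u"
    using balance_le_max[of "length u" u i] True by (simp add: balance_length)
  then obtain v where v: "v \<in> component plac_edges w0"
      "\<forall>x. int (count_list v x) = int (count_list u x) - int ?n * letter_weight i x"
    using kashiwara_f_iterate[OF assms] by blast
  have "int (count_list v x) = int (count_list u (transpose i (Suc i) x))" for x
    using v(2)[rule_format, of x] True by (auto simp: letter_weight_def transpose_def)
  then show ?thesis
    using v(1) by (intro bexI[of _ v]) (auto simp: fun_eq_iff)
next
  case False
  let ?n = "count_list u (Suc i) - count_list u i"
  have "int ?n \<le> max_balance i u - balance i u (length u)"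
    using max_balance_nonneg[of i u] False by (simp add: balance_length)
  then obtain v where v: "v \<in> component plac_edges w0"
      "\<forall>x. int (count_list v x) = int (count_list u x) + int ?n * letter_weight i x"
    using kashiwara_e_iterate[OF assms] by blast
  have "int (count_list v x) = int (count_list u (transpose i (Suc i) x))" for x
    using v(2)[rule_format, of x] False by (auto simp: letter_weight_def transpose_def)
  then show ?thesis
    using v(1) by (intro bexI[of _ v]) (auto simp: fun_eq_iff)
qed

definition content_from :: "nat \<Rightarrow> nat list \<Rightarrow> nat \<Rightarrow> nat" where
  "content_from b xs x = (if b \<le> x \<and> x < b + length xs then xs ! (x - b) else 0)"

lemma content_from_swap_adjacent:
  "Suc m < length xs \<Longrightarrow>
   content_from b (swap_adjacent m xs) = content_from b xs \<circ> transpose (b + m) (Suc (b + m))"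
  by (auto simp: fun_eq_iff content_from_def swap_adjacent_def transpose_def nth_list_update)

lemma plac_component_permute_content:
  assumes "word w0" "u \<in> component plac_edges w0" "1 \<le> b"
    and "count_list u = content_from b xs" "mset xs = mset ys"
  shows "\<exists>v\<in>component plac_edges w0. count_list v = content_from b ys"
  using assms(5)
proof (rule mset_eq_adjacent_swaps_induct)
  show "\<exists>v\<in>component plac_edges w0. count_list v = content_from b xs"
    using assms(2,4) by blast
next
  fix zs m
  assume "\<exists>v\<in>component plac_edges w0. count_list v = content_from b zs" "Suc m < length zs"
  then show "\<exists>v\<in>component plac_edges w0. count_list v = content_from b (swap_adjacent m zs)"
    using plac_component_transpose_content[OF assms(1), of _ "b + m"] assms(3)
    by (fastforce simp: content_from_swap_adjacent)
qed

text \<open>Without a subsequence \<open>(i+1) i\<close>, the operator \<open>f\<^sub>i\<close> of \<open>\<Gamma>(hypo)\<close> can be applied until no \<open>i\<close> is left.\<close>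

lemma plac_component_remove_letter:
  assumes "word w0" "u \<in> component plac_edges w0" "1 \<le> i" "\<not> has_subseq2 u (Suc i) i"
  shows "\<exists>v\<in>component plac_edges w0. set v \<subseteq> insert (Suc i) (set u - {i})"
  using assms(2,4)
proof (induction "count_list u i" arbitrary: u rule: less_induct)
  case less
  show ?case
  proof (cases "i \<in> set u")
    case False
    then show ?thesis using less.prems(1) by blast
  next
    case True
    then obtain v where q: "quasi_f i u = Some v"
      using less.prems(2) by (simp add: quasi_f_def)
    obtain p where p: "p < length u" "u ! p = i" "v = u[p := Suc i]"
      using quasi_f_SomeE[OF q] by blast
    have "v \<in> component plac_edges w0"
      using quasi_f_in_plac_component[OF assms(1) less.prems(1) assms(3) q] .
    moreover have "count_list v i < count_list u i"
      using count_list_update_letter[OF p(1,2), of "Suc i" i] p(3) by simp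
    moreover have "\<not> has_subseq2 v (Suc i) i"
      using q by (rule quasi_f_no_descent)
    ultimately obtain w where "w \<in> component plac_edges w0" "set w \<subseteq> insert (Suc i) (set v - {i})"
      using less.hyps by blast
    moreover have "set v \<subseteq> insert (Suc i) (set u)"
      using p(3) set_update_subset_insert by metis
    ultimately show ?thesis
      by blast
  qed
qed

lemma plac_component_lowest_weight:
  assumes "word w0" "\<forall>x\<in>set w0. x \<le> N"
  shows "\<exists>L\<in>component plac_edges w0. (\<forall>x\<in>set L. x \<le> N) \<and> (\<forall>i. 1 \<le> i \<and> i < N \<longrightarrow> kashiwara_f i L = None)"
proof -
  have "\<exists>L\<in>component plac_edges w0. (\<forall>x\<in>set L. x \<le> N) \<and> (\<forall>i. 1 \<le> i \<and> i < N \<longrightarrow> kashiwara_f i L = None)"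
    if "u \<in> component plac_edges w0" "\<forall>x\<in>set u. x \<le> N" for u
    using that
  proof (induction "sum_list (map (\<lambda>x. N - x) u)" arbitrary: u rule: less_induct)
    case less
    show ?case
    proof (cases "\<forall>i. 1 \<le> i \<and> i < N \<longrightarrow> kashiwara_f i u = None")
      case True
      then show ?thesis using less.prems by blast
    next
      case False
      then obtain i v where iv: "1 \<le> i" "i < N" "kashiwara_f i u = Some v"
        by auto
      obtain p where p: "p < length u" "u ! p = i" "v = u[p := Suc i]"
        using kashiwara_f_SomeD[OF iv(3)] by blast
      have "v \<in> component plac_edges w0"
        using kashiwara_f_in_plac_component[OF assms(1) less.prems(1) iv(1,3)] .
      moreover have "\<forall>x\<in>set v. x \<le> N"
        using p(3) less.prems(2) iv(2) set_update_subset_insert[of u p "Suc i"] by auto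
      moreover have "N - u ! p \<le> sum_list (map (\<lambda>x. N - x) u)"
        using member_le_sum_list[of "N - u ! p" "map (\<lambda>x. N - x) u"] p(1) by simp
      then have "sum_list (map (\<lambda>x. N - x) v) < sum_list (map (\<lambda>x. N - x) u)"
        using p iv(2) by (simp add: map_update sum_list_update)
      ultimately show ?thesis
        using less.hyps by blast
    qed
  qed
  then show ?thesis
    using assms(2) component_refl by blast
qed

section \<open>Schensted insertion\<close>

definition strict_first_column :: "nat list list \<Rightarrow> bool" where
  "strict_first_column T \<longleftrightarrow> [] \<notin> set T \<and> sorted_wrt (<) (map hd T)"

lemma strict_first_column_Cons:
  "strict_first_column (r # T) \<longleftrightarrow> r \<noteq> [] \<and> strict_first_column T \<and> (T \<noteq> [] \<longrightarrow> hd r < hd (hd T))"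
  by (cases T) (auto simp: strict_first_column_def sorted_wrt2)

lemma row_insert_ne: "row_insert x T \<noteq> []"
  by (cases T) (auto simp: Let_def)

lemma takeWhile_le_bump:
  fixes x :: nat and r :: "nat list"
  defines "k \<equiv> length (takeWhile (\<lambda>y. y \<le> x) r)"
  assumes "k \<noteq> length r"
  shows "k < length r" "x < r ! k"
proof -
  show k: "k < length r"
    using assms length_takeWhile_le[of _ r] by (simp add: order_less_le)
  show "x < r ! k"
    using nth_length_takeWhile[of "\<lambda>y. y \<le> x" r] k unfolding k_def by simp
qed

lemma hd_le_iff_takeWhile_ne:
  "r \<noteq> [] \<Longrightarrow> hd r \<le> x \<longleftrightarrow> 0 < length (takeWhile (\<lambda>y. y \<le> x) r)"
  by (cases r) auto

lemma hd_row_insert: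
  assumes "strict_first_column T"
  shows "hd (hd (row_insert x T)) = (if T = [] then x else min x (hd (hd T)))"
proof (cases T)
  case (Cons r T')
  define k where "k = length (takeWhile (\<lambda>y. y \<le> x) r)"
  have r: "r \<noteq> []"
    using assms Cons by (simp add: strict_first_column_Cons)
  then have "hd r \<le> x \<longleftrightarrow> 0 < k"
    unfolding k_def by (rule hd_le_iff_takeWhile_ne)
  then show ?thesis
    using Cons r by (auto simp: Let_def k_def[symmetric] hd_list_update min_def)
qed simp

lemma strict_first_column_row_insert:
  "strict_first_column T \<Longrightarrow> strict_first_column (row_insert x T)"
proof (induction x T rule: row_insert.induct)
  case (1 x)
  then show ?case by (simp add: strict_first_column_def)
next
  case (2 x r T)
  define k where "k = length (takeWhile (\<lambda>y. y \<le> x) r)"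
  have r: "r \<noteq> []" and T: "strict_first_column T" and hd_T: "T \<noteq> [] \<Longrightarrow> hd r < hd (hd T)"
    using "2.prems" by (auto simp: strict_first_column_Cons)
  show ?case
  proof (cases "k = length r")
    case True
    then show ?thesis
      using "2.prems" r by (simp add: Let_def k_def[symmetric] strict_first_column_Cons)
  next
    case False
    note bump = takeWhile_le_bump[of x r, folded k_def, OF False]
    have "hd r \<le> x \<longleftrightarrow> 0 < k"
      unfolding k_def using r by (rule hd_le_iff_takeWhile_ne)
    then have "hd (r[k := x]) \<le> x" "hd (r[k := x]) \<le> hd r"
      using r by (auto simp: hd_list_update)
    then have "hd (r[k := x]) < hd (hd (row_insert (r ! k) T))"
      using hd_row_insert[OF T, of "r ! k"] bump(2) hd_T by (cases "T = []") auto
    moreover have "r[k := x] \<noteq> []"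
      using r by simp
    ultimately show ?thesis
      using False "2.IH"[OF k_def False T] row_insert_ne[of "r ! k" T]
      by (simp add: Let_def k_def[symmetric] strict_first_column_Cons)
  qed
qed

lemma set_row_insert: "set (concat (row_insert x T)) \<subseteq> insert x (set (concat T))"
proof (induction x T rule: row_insert.induct)
  case (2 x r T)
  define k where "k = length (takeWhile (\<lambda>y. y \<le> x) r)"
  show ?case
  proof (cases "k = length r")
    case False
    then have "r ! k \<in> set r"
      using takeWhile_le_bump(1)[of x r] unfolding k_def by simp
    then show ?thesis
      using "2.IH"[OF k_def False] False set_update_subset_insert[of r k x]
      by (auto simp: Let_def k_def[symmetric])
  qed (simp add: Let_def k_def[symmetric])
qed simp

lemma schensted_P_snoc: "schensted_P (w @ [x]) = row_insert x (schensted_P w)"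
  by (simp add: schensted_P_def)

lemma strict_first_column_schensted_P: "strict_first_column (schensted_P w)"
proof (induction w rule: rev_induct)
  case Nil
  then show ?case by (simp add: schensted_P_def strict_first_column_def)
next
  case (snoc x w)
  then show ?case by (simp add: schensted_P_snoc strict_first_column_row_insert)
qed

lemma set_concat_schensted_P: "set (concat (schensted_P w)) \<subseteq> set w"
proof (induction w rule: rev_induct)
  case Nil
  then show ?case by (simp add: schensted_P_def)
next
  case (snoc x w)
  then show ?case
    using set_row_insert[of x "schensted_P w"] by (simp add: schensted_P_snoc) blast
qed

lemma length_schensted_P_le_card: "length (schensted_P w) \<le> card (set w)"
proof -
  let ?T = "schensted_P w"
  have T: "[] \<notin> set ?T" "sorted_wrt (<) (map hd ?T)" "set (concat ?T) \<subseteq> set w"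
    using strict_first_column_schensted_P[of w] set_concat_schensted_P[of w]
    by (auto simp: strict_first_column_def)
  have "hd r \<in> set (concat ?T)" if "r \<in> set ?T" for r
    using that T(1) hd_in_set[of r] by (metis UN_iff set_concat)
  then have "set (map hd ?T) \<subseteq> set w"
    using T(3) by auto
  moreover have "distinct (map hd ?T)"
    using T(2) by (simp add: strict_sorted_iff)
  ultimately show ?thesis
    using card_mono[of "set w" "set (map hd ?T)"] distinct_card[of "map hd ?T"] by simp
qed

definition col_height :: "nat list \<Rightarrow> nat \<Rightarrow> nat" where
  "col_height l c = length (filter (\<lambda>y. c < y) l)"

definition addable :: "nat list \<Rightarrow> nat \<Rightarrow> bool" where
  "addable l r \<longleftrightarrow> r = 0 \<or> nth_default 0 l r < nth_default 0 l (r - 1)"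

definition add_box :: "nat list \<Rightarrow> nat \<Rightarrow> nat list" where
  "add_box l r = (if r < length l then l[r := Suc (l ! r)] else l @ [1])"

lemma col_height_le_length: "col_height l c \<le> length l"
  by (simp add: col_height_def)

lemma less_col_height_iff:
  assumes "sorted_wrt (\<ge>) l"
  shows "r < col_height l c \<longleftrightarrow> c < nth_default 0 l r"
proof -
  have "r < col_height l c \<longleftrightarrow> r < length l \<and> (\<forall>j\<le>r. c < l ! j)"
    unfolding col_height_def filter_less_eq_takeWhile[OF assms] by (rule less_length_takeWhile_iff)
  also have "\<dots> \<longleftrightarrow> c < nth_default 0 l r"
    using assms by (auto simp: nth_default_def sorted_wrt_iff_nth_less le_less intro: less_le_trans)
  finally show ?thesis .
qed

lemma addable_le_length: "addable l r \<Longrightarrow> r \<le> length l"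
  by (auto simp: addable_def nth_default_def split: if_splits)

lemma nth_default_less_if_addable:
  assumes "sorted_wrt (\<ge>) l" "addable l r0" "r < r0"
  shows "nth_default 0 l r0 < nth_default 0 l r"
proof -
  have "nth_default 0 l (r0 - 1) \<le> nth_default 0 l r"
    using nth_default_antimono[OF assms(1)] assms(3) by simp
  then show ?thesis
    using assms(2,3) by (auto simp: addable_def)
qed

lemma col_height_addable:
  assumes "sorted_wrt (\<ge>) l" "addable l r0"
  shows "col_height l (nth_default 0 l r0) = r0"
proof -
  have "r < col_height l (nth_default 0 l r0) \<longleftrightarrow> r < r0" for r
    using less_col_height_iff[OF assms(1)] nth_default_less_if_addable[OF assms]
      nth_default_antimono[OF assms(1), of r0 r] by (meson leD not_less)
  then show ?thesis
    by (metis less_irrefl nat_neq_iff)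
qed

lemma col_height_add_box:
  assumes "r0 \<le> length l"
  shows "col_height (add_box l r0) c = col_height l c + (if c = nth_default 0 l r0 then 1 else 0)"
proof (cases "r0 < length l")
  case True
  have l: "l = take r0 l @ l ! r0 # drop (Suc r0) l"
    using True by (simp add: id_take_nth_drop)
  have l': "add_box l r0 = take r0 l @ Suc (l ! r0) # drop (Suc r0) l"
    using True by (simp add: add_box_def upd_conv_take_nth_drop)
  show ?thesis
    unfolding col_height_def using True by (subst l', subst (2) l) (auto simp: nth_default_def)
next
  case False
  then show ?thesis
    using assms by (auto simp: col_height_def add_box_def nth_default_def)
qed

lemma length_add_box: "r0 \<le> length l \<Longrightarrow> length (add_box l r0) = max (length l) (Suc r0)"
  by (auto simp: add_box_def)

lemma nth_default_add_box:
  "r0 \<le> length l \<Longrightarrow> nth_default 0 (add_box l r0) r = nth_default 0 l r + (if r = r0 then 1 else 0)"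
  by (auto simp: add_box_def nth_default_def nth_append)

lemma sorted_add_box:
  assumes "sorted_wrt (\<ge>) l" "0 \<notin> set l" "addable l r0"
  shows "sorted_wrt (\<ge>) (add_box l r0)"
proof (cases "r0 < length l")
  case False
  then show ?thesis
    using assms by (auto simp: add_box_def sorted_wrt_append Suc_le_eq) (metis gr0I)
next
  case True
  have "l ! r0 < l ! i" if "i < r0" for i
    using nth_default_less_if_addable[OF assms(1,3) that] True that by (simp add: nth_default_def)
  then show ?thesis
    using assms(1) True unfolding sorted_wrt_iff_nth_less add_box_def
    by (auto simp: nth_list_update Suc_le_eq le_SucI)
qed

lemma zero_notin_add_box: "0 \<notin> set l \<Longrightarrow> 0 \<notin> set (add_box l r)"
  by (auto simp: add_box_def dest: set_update_subset_insert[THEN subsetD])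

text \<open>The tableau of shape \<open>l\<close> whose column of height \<open>h\<close> is filled with \<open>N + 1 - h, \<dots>, N\<close>;
  it is the Schensted tableau of a lowest weight word.\<close>

definition lowest_row :: "nat \<Rightarrow> nat list \<Rightarrow> nat \<Rightarrow> nat list" where
  "lowest_row N l r = map (\<lambda>c. N + 1 + r - col_height l c) [0..<nth_default 0 l r]"

definition lowest_tableau :: "nat \<Rightarrow> nat list \<Rightarrow> nat list list" where
  "lowest_tableau N l = map (lowest_row N l) [0..<length l]"

lemma tableau_shape_lowest_tableau: "tableau_shape (lowest_tableau N l) = l"
  by (rule nth_equalityI) (simp_all add: tableau_shape_def lowest_tableau_def lowest_row_def nth_default_nth)

context
  fixes N x r0 :: nat and l :: "nat list"
  assumes sorted: "sorted_wrt (\<ge>) l" and len: "length l \<le> N"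
    and x: "1 \<le> x" "x \<le> N" and r0: "r0 = N - x" and addable: "addable l r0"
begin

lemma lowest_row_add_box_below: "r0 < r \<Longrightarrow> lowest_row N (add_box l r0) r = lowest_row N l r"
  using nth_default_antimono[OF sorted, of r0 r] addable_le_length[OF addable]
  by (auto simp: lowest_row_def nth_default_add_box col_height_add_box)

lemma lowest_row_add_box_at: "lowest_row N (add_box l r0) r0 = lowest_row N l r0 @ [N]"
proof -
  have "nth_default 0 (add_box l r0) r0 = Suc (nth_default 0 l r0)"
    using nth_default_add_box[OF addable_le_length[OF addable]] by simp
  moreover have "map (\<lambda>c. N + 1 + r0 - col_height (add_box l r0) c) [0..<nth_default 0 l r0] =
      map (\<lambda>c. N + 1 + r0 - col_height l c) [0..<nth_default 0 l r0]"
    using col_height_add_box[OF addable_le_length[OF addable]] by simp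
  moreover have "N + 1 + r0 - col_height (add_box l r0) (nth_default 0 l r0) = N"
    using col_height_add_box[OF addable_le_length[OF addable]] col_height_addable[OF sorted addable] by simp
  ultimately show ?thesis
    by (simp add: lowest_row_def)
qed

lemma lowest_row_add_box_above:
  assumes "r < r0"
  shows "lowest_row N (add_box l r0) r = (lowest_row N l r)[nth_default 0 l r0 := x + r]"
proof -
  have len: "nth_default 0 (add_box l r0) r = nth_default 0 l r"
    using nth_default_add_box[OF addable_le_length[OF addable]] assms by simp
  have "N + 1 + r - col_height (add_box l r0) (nth_default 0 l r0) = x + r"
    using col_height_add_box[OF addable_le_length[OF addable]] col_height_addable[OF sorted addable] x r0
    by simp
  then show ?thesis
    using len nth_default_less_if_addable[OF sorted addable assms]
      col_height_add_box[OF addable_le_length[OF addable]]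
    by (intro nth_equalityI) (auto simp: lowest_row_def nth_list_update)
qed

lemma lowest_row_le:
  assumes "y \<in> set (lowest_row N l r0)"
  shows "y \<le> N"
proof -
  obtain c where "c < nth_default 0 l r0" "y = N + 1 + r0 - col_height l c"
    using assms by (auto simp: lowest_row_def)
  moreover from \<open>c < nth_default 0 l r0\<close> have "r0 < col_height l c"
    using less_col_height_iff[OF sorted] by simp
  ultimately show ?thesis
    by simp
qed

lemma lowest_row_bump:
  assumes "r < r0"
  shows "length (takeWhile (\<lambda>y. y \<le> x + r) (lowest_row N l r)) = nth_default 0 l r0"
    and "nth_default 0 l r0 < length (lowest_row N l r)" and "lowest_row N l r ! nth_default 0 l r0 = x + Suc r"
proof -
  have "N + 1 + r - col_height l c \<le> x + r \<longleftrightarrow> c < nth_default 0 l r0" for c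
    using less_col_height_iff[OF sorted, of r0 c] col_height_le_length[of l c] len x r0 by auto
  then show "length (takeWhile (\<lambda>y. y \<le> x + r) (lowest_row N l r)) = nth_default 0 l r0"
    unfolding lowest_row_def using nth_default_less_if_addable[OF sorted addable assms]
    by (intro length_takeWhile_map_upt) auto
  show "nth_default 0 l r0 < length (lowest_row N l r)"
    using nth_default_less_if_addable[OF sorted addable assms] by (simp add: lowest_row_def)
  then show "lowest_row N l r ! nth_default 0 l r0 = x + Suc r"
    using col_height_addable[OF sorted addable] x r0 by (simp add: lowest_row_def)
qed

lemma row_insert_lowest_rows_from_r0:
  "row_insert N (map (lowest_row N l) [r0..<length l]) =
   map (lowest_row N (add_box l r0)) [r0..<length (add_box l r0)]"
proof -
  have "takeWhile (\<lambda>y. y \<le> N) (lowest_row N l r0) = lowest_row N l r0"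
    using lowest_row_le by (subst takeWhile_eq_all_conv) blast
  then have all: "length (takeWhile (\<lambda>y. y \<le> N) (lowest_row N l r0)) = length (lowest_row N l r0)"
    by (rule arg_cong)
  show ?thesis
  proof (cases "r0 < length l")
    case True
    then have "length (add_box l r0) = length l"
      using length_add_box[OF addable_le_length[OF addable]] by simp
    moreover have
      "map (lowest_row N (add_box l r0)) [Suc r0..<length l] = map (lowest_row N l) [Suc r0..<length l]"
      using lowest_row_add_box_below by simp
    ultimately show ?thesis
      using True all lowest_row_add_box_at by (simp add: upt_conv_Cons Let_def)
  next
    case False
    then have "length (add_box l r0) = Suc r0" "r0 = length l"
      using length_add_box[OF addable_le_length[OF addable]] addable_le_length[OF addable] by simp_all
    moreover have "lowest_row N l r0 = []"
      using False by (simp add: lowest_row_def nth_default_def)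
    ultimately show ?thesis
      using lowest_row_add_box_at by simp
  qed
qed

lemma row_insert_lowest_rows_above_r0:
  assumes "r < r0"
  shows "row_insert (x + r) (map (lowest_row N l) [r..<length l]) =
    lowest_row N (add_box l r0) r # row_insert (x + Suc r) (map (lowest_row N l) [Suc r..<length l])"
  using lowest_row_bump[OF assms] lowest_row_add_box_above[OF assms] assms addable_le_length[OF addable]
  by (simp add: upt_conv_Cons Let_def)

text \<open>Inserting \<open>x\<close> bumps, in each row \<open>r < N - x\<close>, the entry \<open>x + r + 1\<close> of column \<open>nth_default 0 l (N - x)\<close>,
  and finally appends \<open>N\<close> to row \<open>N - x\<close>.\<close>

lemma row_insert_lowest_tableau:
  "row_insert x (lowest_tableau N l) = lowest_tableau N (add_box l r0)"
proof -
  let ?l' = "add_box l r0"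
  have "row_insert (x + r) (map (lowest_row N l) [r..<length l]) = map (lowest_row N ?l') [r..<length ?l']"
    if "r \<le> r0" for r
    using that
  proof (induction r rule: inc_induct)
    case base
    then show ?case
      using row_insert_lowest_rows_from_r0 x r0 by simp
  next
    case (step r)
    moreover have "r < length ?l'"
      using step.hyps length_add_box[OF addable_le_length[OF addable]] by simp
    ultimately show ?case
      using row_insert_lowest_rows_above_r0 by (simp add: upt_conv_Cons)
  qed
  then show ?thesis
    unfolding lowest_tableau_def using x by fastforce
qed

end

lemma addable_if_ballot:
  assumes content: "\<forall>r<N. count_list q (N - r) = nth_default 0 l r" and x: "1 \<le> x" "x \<le> N"
    and ballot: "x < N \<Longrightarrow> count_list q x < count_list q (Suc x)"
  shows "addable l (N - x)"
proof (cases "x = N")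
  case False
  have "nth_default 0 l (N - x) = count_list q x" "nth_default 0 l (N - x - 1) = count_list q (Suc x)"
    using content[rule_format, of "N - x"] content[rule_format, of "N - x - 1"] x False by simp_all
  then show ?thesis
    using ballot x False by (simp add: addable_def)
qed (simp add: addable_def)

lemma content_add_box:
  assumes "\<forall>r<N. count_list q (N - r) = nth_default 0 l r" "1 \<le> x" "x \<le> N" "N - x \<le> length l" "r < N"
  shows "count_list (q @ [x]) (N - r) = nth_default 0 (add_box l (N - x)) r"
proof -
  have "x = N - r \<longleftrightarrow> r = N - x"
    using assms(2,3,5) by auto
  then show ?thesis
    using assms(1,5) nth_default_add_box[OF assms(4), of r] by auto
qed

text \<open>Each letter \<open>x\<close> adds a box to row \<open>N - x\<close>; the ballot condition is what keeps the shape a partition.\<close>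

lemma schensted_P_prefix_ballot:
  assumes "word L" "\<forall>x\<in>set L. x \<le> N"
    and "\<And>i t. 1 \<le> i \<Longrightarrow> i < N \<Longrightarrow> t \<le> length L \<Longrightarrow>
      count_list (take t L) i \<le> count_list (take t L) (Suc i)"
  shows "\<exists>l. schensted_P L = lowest_tableau N l \<and> sorted_wrt (\<ge>) l \<and> 0 \<notin> set l \<and> length l \<le> N
           \<and> (\<forall>r<N. count_list L (N - r) = nth_default 0 l r)"
  using assms
proof (induction L rule: rev_induct)
  case Nil
  show ?case
    by (intro exI[of _ "[]"]) (simp add: schensted_P_def lowest_tableau_def)
next
  case (snoc x q)
  have x: "1 \<le> x" "x \<le> N"
    using snoc.prems(1,2) by (auto simp: word_def)
  have "count_list (take t q) i \<le> count_list (take t q) (Suc i)" if "1 \<le> i" "i < N" "t \<le> length q" for i t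
    using snoc.prems(3)[of i t] that by simp
  moreover have "word q" "\<forall>y\<in>set q. y \<le> N"
    using snoc.prems(1,2) by (auto simp: word_def)
  ultimately obtain l where l: "schensted_P q = lowest_tableau N l" "sorted_wrt (\<ge>) l" "0 \<notin> set l"
      "length l \<le> N" "\<forall>r<N. count_list q (N - r) = nth_default 0 l r"
    using snoc.IH by blast
  have "x < N \<Longrightarrow> count_list q x < count_list q (Suc x)"
    using snoc.prems(3)[of x "length (q @ [x])"] x by simp
  then have addable: "addable l (N - x)"
    using addable_if_ballot[OF l(5) x] by blast
  have "schensted_P (q @ [x]) = lowest_tableau N (add_box l (N - x))"
    using row_insert_lowest_tableau[OF l(2,4) x refl addable] l(1) by (simp add: schensted_P_snoc)
  moreover have "length (add_box l (N - x)) \<le> N"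
    using length_add_box[OF addable_le_length[OF addable]] l(4) x by simp
  ultimately show ?case
    using sorted_add_box[OF l(2,3) addable] zero_notin_add_box[OF l(3)]
      content_add_box[OF l(5) x addable_le_length[OF addable]] by blast
qed

lemma lowest_weight_content:
  assumes "word L" "\<forall>x\<in>set L. x \<le> N" "\<forall>i. 1 \<le> i \<and> i < N \<longrightarrow> kashiwara_f i L = None" "r < N"
  shows "count_list L (N - r) = nth_default 0 (tableau_shape (schensted_P L)) r"
proof -
  have "count_list (take t L) i \<le> count_list (take t L) (Suc i)" if "1 \<le> i" "i < N" "t \<le> length L" for i t
    using kashiwara_f_None_balance_nonpos[of i L t] assms(3) that by (simp add: balance_def)
  then obtain l where "schensted_P L = lowest_tableau N l" "\<forall>r<N. count_list L (N - r) = nth_default 0 l r"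
    using schensted_P_prefix_ballot[OF assms(1,2)] by blast
  then show ?thesis
    using assms(4) by (simp add: tableau_shape_lowest_tableau)
qed

lemma lowest_weight_content_from:
  assumes "word L" "\<forall>x\<in>set L. x \<le> N" "\<forall>i. 1 \<le> i \<and> i < N \<longrightarrow> kashiwara_f i L = None"
  shows "length (tableau_shape (schensted_P L)) \<le> N"
    and "count_list L =
      content_from (Suc N - length (tableau_shape (schensted_P L))) (rev (tableau_shape (schensted_P L)))"
proof -
  let ?sh = "tableau_shape (schensted_P L)"
  let ?k = "length ?sh"
  have "set L \<subseteq> {1..N}"
    using assms(1,2) by (auto simp: word_def Suc_le_eq)
  have "?k = length (schensted_P L)"
    by (simp add: tableau_shape_def)
  also have "\<dots> \<le> card (set L)"
    by (rule length_schensted_P_le_card)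
  also have "\<dots> \<le> card {1..N}"
    using \<open>set L \<subseteq> {1..N}\<close> by (intro card_mono) auto
  finally show "?k \<le> N"
    by simp
  let ?b = "Suc N - ?k"
  have "count_list L y = content_from ?b (rev ?sh) y" for y
  proof (cases "1 \<le> y \<and> y \<le> N")
    case True
    then have "count_list L y = nth_default 0 ?sh (N - y)"
      using lowest_weight_content[OF assms, of "N - y"] by simp
    moreover have "?b \<le> y \<longleftrightarrow> N - y < ?k" "y < ?b + ?k" "y - ?b = ?k - Suc (N - y)"
      using True \<open>?k \<le> N\<close> by auto
    moreover have "rev ?sh ! (?k - Suc (N - y)) = ?sh ! (N - y)" if "N - y < ?k"
      using that rev_nth[of "?k - Suc (N - y)" ?sh] by simp
    ultimately show ?thesis
      by (auto simp: content_from_def nth_default_def)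
  next
    case False
    then have "y \<notin> set L"
      using assms(1,2) by (auto simp: word_def)
    then show ?thesis
      using False \<open>?k \<le> N\<close> by (auto simp: content_from_def)
  qed
  then show "count_list L = content_from ?b (rev ?sh)"
    by blast
qed

section \<open>Quasi-ribbon shapes\<close>

definition qr_row_lengths :: "nat list \<Rightarrow> nat list \<Rightarrow> nat list" where
  "qr_row_lengths u ls = map (\<lambda>g. sum_list (map (count_list u) g)) (qr_groups u ls)"

lemma qr_groups_ne: "ls \<noteq> [] \<Longrightarrow> qr_groups u ls \<noteq> []"
  by (induction u ls rule: qr_groups.induct) (auto simp: Let_def)

lemma qr_row_lengths_Nil [simp]: "qr_row_lengths u [] = []"
  and qr_row_lengths_single [simp]: "qr_row_lengths u [a] = [count_list u a]"
  by (simp_all add: qr_row_lengths_def)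

lemma qr_row_lengths_ne: "ls \<noteq> [] \<Longrightarrow> qr_row_lengths u ls \<noteq> []"
  by (simp add: qr_row_lengths_def qr_groups_ne)

lemma qr_row_lengths_Cons_Cons:
  "qr_row_lengths u (a # b # rest) =
     (let g = qr_row_lengths u (b # rest)
      in if has_subseq2 u b a then count_list u a # g else (count_list u a + hd g) # tl g)"
  using qr_groups_ne[of "b # rest" u] unfolding qr_row_lengths_def
  by (cases "qr_groups u (b # rest)") (auto simp: Let_def)

lemma qr_shape_eq_qr_row_lengths: "qr_shape u = qr_row_lengths u (sorted_list_of_set (set u))"
proof -
  have "length (concat (map (\<lambda>a. replicate (count_list u a) a) g)) = sum_list (map (count_list u) g)" for g
    by (induction g) auto
  then show ?thesis
    unfolding qr_shape_def qr_tableau_def qr_row_lengths_def by (simp add: comp_def)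
qed

lemma has_subseq2_map_inj_on:
  assumes "inj_on s (set u)" "a \<in> set u" "b \<in> set u"
  shows "has_subseq2 (map s u) (s b) (s a) \<longleftrightarrow> has_subseq2 u b a"
proof -
  have eq: "s (u ! p) = s y \<longleftrightarrow> u ! p = y" if "p < length u" "y \<in> set u" for p y
    using assms(1) that by (meson inj_on_eq_iff nth_mem)
  show ?thesis
    unfolding has_subseq2_def
  proof
    assume "\<exists>p q. p < q \<and> q < length (map s u) \<and> map s u ! p = s b \<and> map s u ! q = s a"
    then obtain p q where "p < q" "q < length u" "s (u ! p) = s b" "s (u ! q) = s a"
      by auto
    then show "\<exists>p q. p < q \<and> q < length u \<and> u ! p = b \<and> u ! q = a"
      using eq assms(2,3) by (metis order.strict_trans)
  qed force
qed

lemma qr_row_lengths_map: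
  assumes "inj_on s (set u)" "set ls \<subseteq> set u"
  shows "qr_row_lengths (map s u) (map s ls) = qr_row_lengths u ls"
  using assms(2)
proof (induction ls rule: induct_list012)
  case (2 a)
  then show ?case
    using count_list_inj_map[OF assms(1)] by simp
next
  case (3 a b rest)
  then show ?case
    using count_list_inj_map[OF assms(1), of a] has_subseq2_map_inj_on[OF assms(1), of a b]
    by (simp add: qr_row_lengths_Cons_Cons Let_def)
qed simp

lemma qr_shape_map_strict_mono:
  assumes "strict_mono_on (set u) s"
  shows "qr_shape (map s u) = qr_shape u"
proof -
  let ?ls = "sorted_list_of_set (set u)"
  have "sorted_wrt (<) ?ls"
    by simp
  then have "sorted_wrt (\<lambda>x y. s x < s y) ?ls"
    by (rule sorted_wrt_mono_rel[rotated]) (use assms in \<open>auto simp: strict_mono_on_def\<close>)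
  then have "sorted_wrt (<) (map s ?ls)"
    by (simp add: sorted_wrt_map)
  then have "sorted (map s ?ls)" "distinct (map s ?ls)"
    by (auto simp: strict_sorted_iff)
  moreover have "set (map s u) = set (map s ?ls)"
    by simp
  ultimately have "sorted_list_of_set (set (map s u)) = map s ?ls"
    using sorted_list_of_set.idem_if_sorted_distinct by metis
  then show ?thesis
    unfolding qr_shape_eq_qr_row_lengths
    using qr_row_lengths_map[OF strict_mono_on_imp_inj_on[OF assms], of ?ls] by simp
qed

definition merge_letter :: "nat \<Rightarrow> nat \<Rightarrow> nat" where
  "merge_letter a x = (if x = Suc a then a else x)"

lemma count_list_merge_letter:
  "count_list (map (merge_letter a) u) a = count_list u a + count_list u (Suc a)"
  by (induction u) (auto simp: merge_letter_def)

lemma count_list_merge_letter_other: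
  "z \<notin> {a, Suc a} \<Longrightarrow> count_list (map (merge_letter a) u) z = count_list u z"
  by (induction u) (auto simp: merge_letter_def)

context
  fixes u :: "nat list" and a :: nat
  assumes a_in: "a \<in> set u" and Suc_a_in: "Suc a \<in> set u" and no_descent: "\<not> has_subseq2 u (Suc a) a"
begin

lemma no_descent_Suc_after: "p < length u \<Longrightarrow> q < length u \<Longrightarrow> u ! p = Suc a \<Longrightarrow> u ! q = a \<Longrightarrow> q < p"
  using no_descent unfolding has_subseq2_def by (metis linorder_neqE_nat n_not_Suc_n)

lemma has_subseq2_merge_other:
  assumes "y \<notin> {a, Suc a}" "z \<notin> {a, Suc a}"
  shows "has_subseq2 (map (merge_letter a) u) y z \<longleftrightarrow> has_subseq2 u y z"
proof -
  have eq: "map (merge_letter a) u ! p = v \<longleftrightarrow> u ! p = v" if "v \<notin> {a, Suc a}" "p < length u" for v p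
    using that by (auto simp: merge_letter_def)
  show ?thesis
    unfolding has_subseq2_def
  proof
    assume "\<exists>p q. p < q \<and> q < length (map (merge_letter a) u) \<and> map (merge_letter a) u ! p = y
        \<and> map (merge_letter a) u ! q = z"
    then obtain p q where
      "p < q" "q < length u" "map (merge_letter a) u ! p = y" "map (merge_letter a) u ! q = z"
      by auto
    then show "\<exists>p q. p < q \<and> q < length u \<and> u ! p = y \<and> u ! q = z"
      using eq[OF assms(1), of p] eq[OF assms(2), of q] by auto
  next
    assume "\<exists>p q. p < q \<and> q < length u \<and> u ! p = y \<and> u ! q = z"
    then obtain p q where "p < q" "q < length u" "u ! p = y" "u ! q = z"
      by auto
    then show "\<exists>p q. p < q \<and> q < length (map (merge_letter a) u) \<and> map (merge_letter a) u ! p = y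
        \<and> map (merge_letter a) u ! q = z"
      using eq[OF assms(1), of p] eq[OF assms(2), of q] by (intro exI[of _ p] exI[of _ q]) auto
  qed
qed

lemma has_subseq2_merge_low:
  assumes "z \<notin> {a, Suc a}"
  shows "has_subseq2 (map (merge_letter a) u) a z \<longleftrightarrow> has_subseq2 u a z"
proof
  assume "has_subseq2 (map (merge_letter a) u) a z"
  then obtain p q where pq: "p < q" "q < length u" "merge_letter a (u ! p) = a" "merge_letter a (u ! q) = z"
    unfolding has_subseq2_def by auto
  have uq: "u ! q = z"
    using pq(4) assms by (auto simp: merge_letter_def split: if_splits)
  show "has_subseq2 u a z"
  proof (cases "u ! p = a")
    case True
    then show ?thesis using pq uq unfolding has_subseq2_def by blast
  next
    case False
    then have up: "u ! p = Suc a"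
      using pq(3) by (auto simp: merge_letter_def split: if_splits)
    obtain r where r: "r < length u" "u ! r = a"
      using a_in by (auto simp: in_set_conv_nth)
    have "r < p"
      using no_descent_Suc_after[OF _ r(1) up r(2)] pq by simp
    then show ?thesis
      using r pq uq unfolding has_subseq2_def by (intro exI[of _ r] exI[of _ q]) auto
  qed
next
  assume "has_subseq2 u a z"
  then obtain p q where "p < q" "q < length u" "u ! p = a" "u ! q = z"
    unfolding has_subseq2_def by auto
  then show "has_subseq2 (map (merge_letter a) u) a z"
    unfolding has_subseq2_def using assms by (intro exI[of _ p] exI[of _ q]) (auto simp: merge_letter_def)
qed

lemma has_subseq2_merge_high:
  assumes "y \<notin> {a, Suc a}"
  shows "has_subseq2 (map (merge_letter a) u) y a \<longleftrightarrow> has_subseq2 u y (Suc a)"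
proof
  assume "has_subseq2 (map (merge_letter a) u) y a"
  then obtain p q where pq: "p < q" "q < length u" "merge_letter a (u ! p) = y" "merge_letter a (u ! q) = a"
    unfolding has_subseq2_def by auto
  have up: "u ! p = y"
    using pq(3) assms by (auto simp: merge_letter_def split: if_splits)
  show "has_subseq2 u y (Suc a)"
  proof (cases "u ! q = Suc a")
    case True
    then show ?thesis using pq up unfolding has_subseq2_def by blast
  next
    case False
    then have uq: "u ! q = a"
      using pq(4) by (auto simp: merge_letter_def split: if_splits)
    obtain r where r: "r < length u" "u ! r = Suc a"
      using Suc_a_in by (auto simp: in_set_conv_nth)
    have "q < r"
      using no_descent_Suc_after[OF r(1) _ r(2) uq] pq by simp
    then show ?thesis
      using r pq up unfolding has_subseq2_def by (intro exI[of _ p] exI[of _ r]) auto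
  qed
next
  assume "has_subseq2 u y (Suc a)"
  then obtain p q where "p < q" "q < length u" "u ! p = y" "u ! q = Suc a"
    unfolding has_subseq2_def by auto
  then show "has_subseq2 (map (merge_letter a) u) y a"
    unfolding has_subseq2_def using assms by (intro exI[of _ p] exI[of _ q]) (auto simp: merge_letter_def)
qed

lemma qr_row_lengths_merge_other:
  "\<forall>z\<in>set zs. z \<notin> {a, Suc a} \<Longrightarrow> qr_row_lengths (map (merge_letter a) u) zs = qr_row_lengths u zs"
proof (induction zs rule: induct_list012)
  case (3 x y zs)
  then show ?case
    using count_list_merge_letter_other[of x] has_subseq2_merge_other[of y x]
    by (simp add: qr_row_lengths_Cons_Cons Let_def)
qed (auto simp: count_list_merge_letter_other)

lemma qr_row_lengths_merge:
  "\<forall>x\<in>set xs. x < a \<Longrightarrow> \<forall>y\<in>set ys. Suc a < y \<Longrightarrow>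
   qr_row_lengths (map (merge_letter a) u) (xs @ a # ys) = qr_row_lengths u (xs @ a # Suc a # ys)"
proof (induction xs)
  case Nil
  show ?case
  proof (cases ys)
    case Nil
    then show ?thesis
      using count_list_merge_letter by (simp add: qr_row_lengths_Cons_Cons Let_def no_descent)
  next
    case (Cons y ys')
    have "y \<notin> {a, Suc a}" "\<forall>z\<in>set (y # ys'). z \<notin> {a, Suc a}"
      using Nil.prems Cons by auto
    then show ?thesis
      using qr_row_lengths_merge_other has_subseq2_merge_high count_list_merge_letter
        qr_row_lengths_ne[of "y # ys'" u] Cons
      by (simp add: qr_row_lengths_Cons_Cons Let_def no_descent)
  qed
next
  case (Cons x xs)
  have x: "x \<notin> {a, Suc a}"
    using Cons.prems by auto
  obtain z t1 t2 where z: "xs @ a # ys = z # t1" "xs @ a # Suc a # ys = z # t2" "z = a \<or> z \<in> set xs"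
    by (cases xs) auto
  have "has_subseq2 (map (merge_letter a) u) z x \<longleftrightarrow> has_subseq2 u z x"
    using z(3) has_subseq2_merge_low[OF x] has_subseq2_merge_other[OF _ x] Cons.prems(1) by auto
  then show ?case
    using Cons z count_list_merge_letter_other[OF x]
    by (simp add: qr_row_lengths_Cons_Cons Let_def)
qed

lemma qr_shape_merge_letter: "qr_shape (map (merge_letter a) u) = qr_shape u"
proof -
  let ?ls = "sorted_list_of_set (set u)"
  have "a \<in> set ?ls"
    using a_in by simp
  then obtain xs zs where xz: "?ls = xs @ a # zs"
    by (meson split_list)
  have sorted: "sorted_wrt (<) (xs @ a # zs)"
    unfolding xz[symmetric] by simp
  then have xs: "\<forall>x\<in>set xs. x < a" and zs: "\<forall>z\<in>set zs. a < z" "sorted_wrt (<) zs"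
    by (auto simp: sorted_wrt_append)
  have "Suc a \<in> set zs"
    using Suc_a_in xz xs by (metis Un_iff insert_iff lessI less_asym set_ConsD set_append
        set_sorted_list_of_set List.finite_set)
  then obtain ys where ys: "zs = Suc a # ys"
    using zs by (cases zs) (auto simp: Suc_le_eq less_le)
  have ys_gt: "\<forall>y\<in>set ys. Suc a < y"
    using zs(2) ys by simp
  have ls: "?ls = xs @ a # Suc a # ys"
    using xz ys by simp
  have "set (map (merge_letter a) u) = set (xs @ a # ys)"
  proof -
    have "set (map (merge_letter a) u) = set u - {Suc a}"
      using a_in by (auto simp: merge_letter_def split: if_splits)
    also have "set u = set (xs @ a # Suc a # ys)"
      by (metis ls set_sorted_list_of_set List.finite_set)
    finally show ?thesis
      using xs ys_gt by auto
  qed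
  moreover have "sorted_wrt (<) (xs @ a # ys)"
    using sorted unfolding ys by (auto simp: sorted_wrt_append)
  then have "sorted (xs @ a # ys)" "distinct (xs @ a # ys)"
    using strict_sorted_iff by blast+
  ultimately have "sorted_list_of_set (set (map (merge_letter a) u)) = xs @ a # ys"
    by (metis sorted_list_of_set.idem_if_sorted_distinct)
  then show ?thesis
    unfolding qr_shape_eq_qr_row_lengths using qr_row_lengths_merge[OF xs ys_gt] ls by simp
qed

end

lemma qr_shape_raise_last_letter:
  assumes p: "p < length u" "u ! p = i" and last: "\<And>q. p < q \<Longrightarrow> q < length u \<Longrightarrow> u ! q \<noteq> i"
    and fresh: "Suc i \<notin> set u"
  shows "qr_shape (u[p := Suc i]) = qr_shape u"
proof (cases "\<exists>q<length u. q \<noteq> p \<and> u ! q = i")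
  case True
  then obtain q where q: "q < length u" "q \<noteq> p" "u ! q = i"
    by blast
  let ?w = "u[p := Suc i]"
  have w_Suc_i: "?w ! r = Suc i \<longleftrightarrow> r = p" if "r < length u" for r
    using that p fresh by (auto simp: nth_list_update) (metis nth_mem)
  have "i \<in> set ?w"
    using q p by (metis length_list_update nth_list_update_neq nth_mem)
  moreover have "Suc i \<in> set ?w"
    using p by (simp add: set_update_memI)
  moreover have "\<not> has_subseq2 ?w (Suc i) i"
    using last w_Suc_i p unfolding has_subseq2_def by (fastforce simp: nth_list_update)
  moreover have "map (merge_letter i) ?w = u"
    using p w_Suc_i by (intro nth_equalityI) (auto simp: merge_letter_def nth_list_update)
  ultimately show ?thesis
    using qr_shape_merge_letter[where u = ?w and a = i] by simp
next
  case False
  then have "u[p := Suc i] = map (\<lambda>y. if y = i then Suc i else y) u"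
    using p by (intro nth_equalityI) (auto simp: nth_list_update)
  moreover have "strict_mono_on (set u) (\<lambda>y. if y = i then Suc i else y)"
  proof (rule strict_mono_onI)
    fix r s
    assume "r \<in> set u" "s \<in> set u" "r < s"
    then show "(if r = i then Suc i else r) < (if s = i then Suc i else s)"
      using fresh by (cases "s = Suc i") auto
  qed
  ultimately show ?thesis
    by (simp add: qr_shape_map_strict_mono)
qed

lemma qr_shape_lower_letters_above:
  assumes "a \<in> set w" "\<not> has_subseq2 w (Suc a) a"
  shows "qr_shape (map (\<lambda>y. if a < y then y - 1 else y) w) = qr_shape w"
proof (cases "Suc a \<in> set w")
  case True
  let ?shift = "\<lambda>y. if Suc a < y then y - 1 else y"
  have "map (\<lambda>y. if a < y then y - 1 else y) w = map ?shift (map (merge_letter a) w)"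
    by (auto simp: merge_letter_def)
  also have "qr_shape \<dots> = qr_shape (map (merge_letter a) w)"
    by (rule qr_shape_map_strict_mono) (auto simp: strict_mono_on_def merge_letter_def)
  also have "\<dots> = qr_shape w"
    by (rule qr_shape_merge_letter[OF assms(1) True assms(2)])
  finally show ?thesis .
next
  case False
  have "strict_mono_on (set w) (\<lambda>y. if a < y then y - 1 else y)"
  proof (rule strict_mono_onI)
    fix r s
    assume "r \<in> set w" "s \<in> set w" "r < s"
    then show "(if a < r then r - 1 else r) < (if a < s then s - 1 else s)"
      using False by (cases "s = Suc a") auto
  qed
  then show ?thesis
    by (rule qr_shape_map_strict_mono)
qed

text \<open>Open a gap above \<open>i\<close>, move the last \<open>i\<close> into the gap (\<open>qr_shape_raise_last_letter\<close>),
  then close the gap, which merges the moved letter with the former letters \<open>i + 1\<close>.\<close>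

lemma qr_shape_quasi_f:
  assumes "quasi_f i u = Some v"
  shows "qr_shape v = qr_shape u"
proof -
  obtain p where p: "p < length u" "u ! p = i" and last: "\<And>q. p < q \<Longrightarrow> q < length u \<Longrightarrow> u ! q \<noteq> i"
    and v: "v = u[p := Suc i]" and no_descent: "\<not> has_subseq2 u (Suc i) i"
    using quasi_f_SomeE[OF assms] by blast
  define gap where "gap y = (if i < y then Suc y else y)" for y
  let ?u1 = "map gap u"
  let ?u2 = "?u1[p := Suc i]"
  have "qr_shape ?u1 = qr_shape u"
    by (rule qr_shape_map_strict_mono) (auto simp: strict_mono_on_def gap_def)
  moreover have "qr_shape ?u2 = qr_shape ?u1"
    using p last by (intro qr_shape_raise_last_letter) (auto simp: gap_def)
  moreover have "v = map (\<lambda>y. if Suc i < y then y - 1 else y) ?u2"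
    using p v by (intro nth_equalityI) (auto simp: gap_def nth_list_update)
  moreover have "\<not> has_subseq2 ?u2 (Suc (Suc i)) (Suc i)"
  proof
    assume "has_subseq2 ?u2 (Suc (Suc i)) (Suc i)"
    then obtain r r' where r: "r < r'" "r' < length u" "?u2 ! r = Suc (Suc i)" "?u2 ! r' = Suc i"
      unfolding has_subseq2_def by auto
    have "r' = p"
      using r(2,4) by (cases "r' = p") (auto simp: gap_def split: if_splits)
    moreover have "r \<noteq> p"
      using r(3) p(1) by auto
    ultimately have "r < p" "u ! r = Suc i"
      using r by (auto simp: gap_def nth_list_update split: if_splits)
    then show False
      using no_descent p unfolding has_subseq2_def by blast
  qed
  moreover have "Suc i \<in> set ?u2"
    using p by (simp add: set_update_memI)
  ultimately show ?thesis
    using qr_shape_lower_letters_above[of "Suc i" ?u2] by simp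
qed

lemma qr_shape_hypo_component:
  assumes "w \<in> component hypo_edges u"
  shows "qr_shape w = qr_shape u"
proof -
  have "(u, w) \<in> (hypo_edges \<union> hypo_edges\<inverse>)\<^sup>*"
    using assms by (simp add: component_def)
  then show ?thesis
    by induction (auto simp: hypo_edges_def dest: qr_shape_quasi_f)
qed

lemma qr_row_lengths_upt:
  assumes "\<And>j. Suc j < m \<Longrightarrow> has_subseq2 u (c + Suc j) (c + j)"
  shows "qr_row_lengths u [c..<c + m] = map (\<lambda>j. count_list u (c + j)) [0..<m]"
  using assms
proof (induction m arbitrary: c)
  case (Suc m)
  show ?case
  proof (cases m)
    case (Suc m')
    have "qr_row_lengths u [Suc c..<Suc c + m] = map (\<lambda>j. count_list u (Suc c + j)) [0..<m]"
      using Suc.prems[of "Suc _"] by (intro Suc.IH) simp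
    moreover have "has_subseq2 u (Suc c) c"
      using Suc.prems[of 0] Suc by simp
    moreover have "[c..<c + Suc m] = c # Suc c # [Suc (Suc c)..<c + Suc m]"
      "[Suc c..<Suc c + m] = Suc c # [Suc (Suc c)..<c + Suc m]"
      using Suc by (simp_all add: upt_conv_Cons)
    ultimately show ?thesis
      by (simp add: qr_row_lengths_Cons_Cons map_upt_Suc del: upt_Suc)
  qed simp
qed simp

lemma set_eq_content_from:
  assumes "composition \<alpha>" "count_list u = content_from b \<alpha>"
  shows "set u = {b..<b + length \<alpha>}"
proof -
  have "x \<in> set u \<longleftrightarrow> content_from b \<alpha> x \<noteq> 0" for x
    using assms(2) count_list_0_iff[of u x] by metis
  then show ?thesis
    using assms(1) by (auto simp: content_from_def composition_def split: if_splits)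
qed

lemma qr_shape_content_from:
  assumes "composition \<alpha>" "count_list u = content_from b \<alpha>"
    and descents: "\<And>j. Suc j < length \<alpha> \<Longrightarrow> has_subseq2 u (b + Suc j) (b + j)"
  shows "qr_shape u = \<alpha>"
proof -
  have "sorted_list_of_set (set u) = [b..<b + length \<alpha>]"
    using set_eq_content_from[OF assms(1,2)] by simp
  then have "qr_shape u = map (\<lambda>j. count_list u (b + j)) [0..<length \<alpha>]"
    unfolding qr_shape_eq_qr_row_lengths using qr_row_lengths_upt[OF descents] by simp
  also have "\<dots> = \<alpha>"
    using assms(2) by (intro nth_equalityI) (simp_all add: content_from_def)
  finally show ?thesis .
qed

section \<open>Words of quasi-ribbon shape \<open>\<alpha>\<close> in a component of \<open>\<Gamma>(plac)\<close>\<close>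

text \<open>The crystal reflections rearrange the content of a lowest weight word into \<open>\<alpha>\<close>.\<close>

lemma plac_component_content_from:
  assumes "word w0" "\<forall>w\<in>component plac_edges w0. tableau_shape (schensted_P w) = sort_partition \<alpha>"
  shows "\<exists>b\<ge>1. \<exists>u\<in>component plac_edges w0. count_list u = content_from b \<alpha>"
proof -
  define N where "N = Suc (sum_list w0)"
  have "\<forall>x\<in>set w0. x \<le> N"
    unfolding N_def using member_le_sum_list by fastforce
  then obtain L where L: "L \<in> component plac_edges w0" "\<forall>x\<in>set L. x \<le> N"
      "\<forall>i. 1 \<le> i \<and> i < N \<longrightarrow> kashiwara_f i L = None"
    using plac_component_lowest_weight[OF assms(1)] by blast
  have shape: "tableau_shape (schensted_P L) = rev (sort \<alpha>)"
    using assms(2) L(1) by (simp add: sort_partition_def)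
  have "length \<alpha> \<le> N" "count_list L = content_from (Suc N - length \<alpha>) (sort \<alpha>)"
    using lowest_weight_content_from[OF word_plac_component[OF assms(1) L(1)] L(2,3)] shape by simp_all
  moreover from this(1) have "1 \<le> Suc N - length \<alpha>"
    by simp
  ultimately show ?thesis
    using plac_component_permute_content[OF assms(1) L(1), of "Suc N - length \<alpha>" "sort \<alpha>" \<alpha>] by auto
qed

text \<open>Consecutive letters of the window are separated by a descent: otherwise \<open>\<Gamma>(hypo)\<close>-moves merge them,
  producing a word with fewer distinct letters than its Schensted tableau has rows.\<close>

lemma plac_component_descent:
  assumes "word w0" "u \<in> component plac_edges w0"
    and rows: "\<forall>w\<in>component plac_edges w0. length (schensted_P w) = k"
    and "set u = {b..<b + k}" "1 \<le> b" "Suc j < k"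
  shows "has_subseq2 u (b + Suc j) (b + j)"
proof (rule ccontr)
  assume "\<not> has_subseq2 u (b + Suc j) (b + j)"
  then obtain v where v: "v \<in> component plac_edges w0" "set v \<subseteq> insert (b + Suc j) (set u - {b + j})"
    using plac_component_remove_letter[OF assms(1,2), of "b + j"] assms(5) by auto
  then have "set v \<subseteq> {b..<b + k} - {b + j}"
    using assms(4,6) by auto
  then have "card (set v) < k"
    using assms(6) card_mono[of "{b..<b + k} - {b + j}" "set v"] by simp
  then show False
    using length_schensted_P_le_card[of v] rows v(1) by simp
qed

lemma plac_component_qr_shape:
  assumes "composition \<alpha>" "word w0"
    and "\<forall>w\<in>component plac_edges w0. tableau_shape (schensted_P w) = sort_partition \<alpha>"
  shows "\<exists>u\<in>component plac_edges w0. qr_shape u = \<alpha>"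
proof -
  obtain b u where u: "1 \<le> b" "u \<in> component plac_edges w0" "count_list u = content_from b \<alpha>"
    using plac_component_content_from[OF assms(2,3)] by blast
  have "\<forall>w\<in>component plac_edges w0. length (schensted_P w) = length \<alpha>"
    using assms(3) by (simp add: tableau_shape_def sort_partition_def flip: length_map[of length])
  then have "has_subseq2 u (b + Suc j) (b + j)" if "Suc j < length \<alpha>" for j
    using plac_component_descent[OF assms(2) u(2)] set_eq_content_from[OF assms(1) u(3)] u(1) that by blast
  then show ?thesis
    using qr_shape_content_from[OF assms(1) u(3)] u(2) by blast
qed

theorem theorem6p2:
  fixes \<alpha> :: "nat list" and C :: "nat list set"
  assumes "composition \<alpha>"
    and "C \<in> plac_components"
    and "\<forall>w\<in>C. tableau_shape (schensted_P w) = sort_partition \<alpha>"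
  shows "\<exists>D\<in>hypo_components. D \<subseteq> C \<and> (\<forall>w\<in>D. qr_shape w = \<alpha>)"
proof -
  obtain w0 where w0: "word w0" "C = component plac_edges w0"
    using assms(2) unfolding plac_components_def by blast
  obtain u where u: "u \<in> C" "qr_shape u = \<alpha>"
    using plac_component_qr_shape[OF assms(1) w0(1)] assms(3) w0(2) by blast
  let ?D = "component hypo_edges u"
  have "?D \<in> hypo_components"
    using word_plac_component[OF w0(1)] u(1) w0(2) unfolding hypo_components_def by blast
  moreover have "?D \<subseteq> C"
    using component_mono[OF hypo_edges_subset_plac_edges, of u] component_trans[of u _ w0] u(1) w0(2) by blast
  moreover have "\<forall>w\<in>?D. qr_shape w = \<alpha>"
    using qr_shape_hypo_component u(2) by blast
  ultimately show ?thesis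
    by blast
qed

end
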